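(* Let $C'\ge 2$ and $m\ge 10$ be integers, let $f:\mathcal X\to\mathbb R^d$ be a fixed feature map and let $D_1,\dots,D_{C'}$ be class-conditional distributions on $\mathcal X$, with the standing assumptions listed in the context (in particular $d_{ij}>0$, finite fourth moments, and $d_{ij}^2+\frac{v_j-v_i}{m}>0$ for all $i\neq j$). For $i\neq j$ define $E^1_{ij}:=\frac{4}{m}\bigl(V_{ij}^2+\tfrac14 V_{ij}\bigr)$, $E^2_{ij}:=\frac{V_{ij}}{m}$, $E^3_{ij}:=\frac{\Theta_{ij}+2(m-1)V_{ij}^2}{m^3}$. Then the average multiclass error of the $m$-shot NCC classifier satisfies \[ \mathrm{err}^{\mathrm{NCC}}_{m}(f)\le \frac{1}{C'}\sum_{i=1}^{C'}\sum_{j\neq i}\frac{4\tilde V_{ij}}{\bigl(1+\frac{v_j-v_i}{m d_{ij}^2}\bigr)^2}+\frac{1}{C'}\sum_{i=1}^{C'}\sum_{j\neq i}\frac{\bigl(\sqrt{E^1_{ij}}+\sqrt{E^2_{ij}}+\sqrt{E^3_{ij}}\bigr)^2}{\bigl(1+\frac{v_j-v_i}{m d_{ij}^2}\bigr)^2}. \]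
   Context: Setup (nearest-class-centroid few-shot classification). Fix $f:\mathcal X\to\mathbb R^d$ and distributions $D_1,\dots,D_{C'}$ on $\mathcal X$. For a class $c$, let $z_c=f(x)$ with $x\sim D_c$, $\mu_c:=\mathbb E[z_c]$, $\Sigma_c:=\mathrm{Cov}(z_c)$, $v_c:=\mathrm{tr}(\Sigma_c)=\mathbb E\|z_c-\mu_c\|_2^2$, and $M_{4,c}:=\mathbb E\|z_c-\mu_c\|_2^4$, assumed finite. For each class $c$ draw a support set $x_{c,1},\dots,x_{c,m}$ i.i.d. from $D_c$, independently across classes; let $\widehat\mu_c:=\frac1m\sum_{s=1}^m f(x_{c,s})$. Given a test feature $z$, NCC predicts $\widehat y(z)\in\arg\min_{c}\|z-\widehat\mu_c\|_2^2$ with an arbitrary fixed tie-breaking rule. The error is $\mathrm{err}^{\mathrm{NCC}}_m(f):=\frac1{C'}\sum_{i=1}^{C'}\Pr(\widehat y(z_i)\neq i)$, where $z_i=f(x_i)$, $x_i\sim D_i$ independent of the support sets, and the probability is over both support sets and test point. For $i\neq j$: $d_{ij}:=\|\mu_j-\mu_i\|_2$ (assumed $>0$), $u_{ij}:=(\mu_j-\mu_i)/d_{ij}$, directional CDNV $\tilde V_{ij}:=\frac{u_{ij}^\top\Sigma_i u_{ij}}{d_{ij}^2}$, CDNV $V_{ij}:=\frac{v_i+v_j}{d_{ij}^2}$, and $\Theta_{ij}:=\frac{M_{4,i}+M_{4,j}}{d_{ij}^4}$. With $\Delta_{i\to j}:=\|z_i-\widehat\mu_j\|_2^2-\|z_i-\widehat\mu_i\|_2^2$,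 one has $\mathbb E[\Delta_{i\to j}]=d_{ij}^2+\frac{v_j-v_i}{m}$, which is assumed positive for all $i\neq j$. *)

theory Defs
  imports "HOL-Probability.Probability"
begin

text \<open>Classes are indexed by 0..C-1. D c is the class-conditional distribution of class c,
  f the feature map into real^'d.\<close>

definition cmean :: "(nat \<Rightarrow> 'x measure) \<Rightarrow> ('x \<Rightarrow> real^'d) \<Rightarrow> nat \<Rightarrow> real^'d" where
  "cmean D f c = (\<integral>x. f x \<partial>(D c))"

definition cvar :: "(nat \<Rightarrow> 'x measure) \<Rightarrow> ('x \<Rightarrow> real^'d) \<Rightarrow> nat \<Rightarrow> real" where
  "cvar D f c = (\<integral>x. (norm (f x - cmean D f c))^2 \<partial>(D c))"

definition cM4 :: "(nat \<Rightarrow> 'x measure) \<Rightarrow> ('x \<Rightarrow> real^'d) \<Rightarrow> nat \<Rightarrow> real" where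
  "cM4 D f c = (\<integral>x. (norm (f x - cmean D f c))^4 \<partial>(D c))"

definition cdist :: "(nat \<Rightarrow> 'x measure) \<Rightarrow> ('x \<Rightarrow> real^'d) \<Rightarrow> nat \<Rightarrow> nat \<Rightarrow> real" where
  "cdist D f i j = norm (cmean D f j - cmean D f i)"

definition cdir :: "(nat \<Rightarrow> 'x measure) \<Rightarrow> ('x \<Rightarrow> real^'d) \<Rightarrow> nat \<Rightarrow> nat \<Rightarrow> real^'d" where
  "cdir D f i j = (1 / cdist D f i j) *\<^sub>R (cmean D f j - cmean D f i)"

definition covq :: "(nat \<Rightarrow> 'x measure) \<Rightarrow> ('x \<Rightarrow> real^'d) \<Rightarrow> nat \<Rightarrow> real^'d \<Rightarrow> real" where
  "covq D f c u = (\<integral>x. (u \<bullet> (f x - cmean D f c))^2 \<partial>(D c))"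

definition dir_cdnv :: "(nat \<Rightarrow> 'x measure) \<Rightarrow> ('x \<Rightarrow> real^'d) \<Rightarrow> nat \<Rightarrow> nat \<Rightarrow> real" where
  "dir_cdnv D f i j = covq D f i (cdir D f i j) / (cdist D f i j)^2"

definition cdnv :: "(nat \<Rightarrow> 'x measure) \<Rightarrow> ('x \<Rightarrow> real^'d) \<Rightarrow> nat \<Rightarrow> nat \<Rightarrow> real" where
  "cdnv D f i j = (cvar D f i + cvar D f j) / (cdist D f i j)^2"

definition ctheta :: "(nat \<Rightarrow> 'x measure) \<Rightarrow> ('x \<Rightarrow> real^'d) \<Rightarrow> nat \<Rightarrow> nat \<Rightarrow> real" where
  "ctheta D f i j = (cM4 D f i + cM4 D f j) / (cdist D f i j)^4"

text \<open>NCC prediction with a fixed tie-breaking rule tb applied to the set of minimisers.\<close>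
definition ncc_pred :: "nat \<Rightarrow> (nat set \<Rightarrow> nat) \<Rightarrow> (nat \<Rightarrow> real^'d) \<Rightarrow> real^'d \<Rightarrow> nat" where
  "ncc_pred C tb mus z =
     tb {c \<in> {..<C}. \<forall>c'\<in>{..<C}. (norm (z - mus c))^2 \<le> (norm (z - mus c'))^2}"

text \<open>Joint law of the support sets (m i.i.d. draws per class, independent across classes)
  and an independent test point from class i.\<close>
definition ncc_space :: "nat \<Rightarrow> nat \<Rightarrow> (nat \<Rightarrow> 'x measure) \<Rightarrow> nat \<Rightarrow> ((nat \<Rightarrow> nat \<Rightarrow> 'x) \<times> 'x) measure" where
  "ncc_space C m D i = (PiM {..<C} (\<lambda>c. PiM {..<m} (\<lambda>s. D c))) \<Otimes>\<^sub>M D i"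

definition ncc_err :: "nat \<Rightarrow> nat \<Rightarrow> (nat \<Rightarrow> 'x measure) \<Rightarrow> ('x \<Rightarrow> real^'d) \<Rightarrow> (nat set \<Rightarrow> nat) \<Rightarrow> real" where
  "ncc_err C m D f tb =
     (1 / real C) * (\<Sum>i<C. measure (ncc_space C m D i)
        {\<omega> \<in> space (ncc_space C m D i).
           ncc_pred C tb (\<lambda>c. (1 / real m) *\<^sub>R (\<Sum>s<m. f (fst \<omega> c s))) (f (snd \<omega>)) \<noteq> i})"

end

theory Submission
  imports Defs
begin

text \<open>
  A test point of class i is misclassified only if \<Delta>_{i->j} \<le> 0 for some j \<noteq> i, so by
  the union bound it suffices to bound Pr(\<Delta>_{i->j} \<le> 0) for each pair. Writing x for
  the test feature and A, B for the two estimated centroids, all centred at the true means, and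
  \<delta> = mu_j - mu_i, one has \<Delta>_{i->j} = E \<Delta>_{i->j} + K - 2 <x, \<delta> + B - A>, where K only
  depends on the support sets: K = 2 <\<delta>, B> + (|B|^2 - v_j/m) - (|A|^2 - v_i/m).
  Chebyshev's inequality reduces the claim to a bound on the second moment of the fluctuation.
  Integrating out the test point first leaves E K^2 + 4 E Q(\<delta> + B - A), with Q the quadratic
  form of Sigma_i; Q(\<delta> + e) exceeds Q(\<delta>) by a term linear in e, which vanishes in
  expectation, plus at most |e|^2 v_i. Finally E K^2 is bounded by
  Minkowski's inequality through the second and fourth moments of a mean of m i.i.d. centred
  vectors, for which E|S_m|^4 \<le> m M_4 + 3 m (m - 1) v^2. Dividing by (E \<Delta>_{i->j})^2 and
  normalising by d_ij gives the stated bound.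
\<close>

section \<open>Second-moment inequalities\<close>

lemma discriminant_le_if_quadratic_nonneg:
  fixes a b c :: real
  assumes "\<And>t. 0 \<le> a - 2 * t * b + t^2 * c"
  shows "b^2 \<le> a * c"
proof (cases "c = 0")
  case True
  have "b = 0"
  proof (rule ccontr)
    assume "b \<noteq> 0"
    have "0 \<le> a - 2 * ((a + 1) / (2 * b)) * b" using assms[of "(a + 1) / (2 * b)"] True by simp
    also have "\<dots> = -1" using \<open>b \<noteq> 0\<close> by (simp add: field_simps)
    finally show False by simp
  qed
  then show ?thesis using True by simp
next
  case False
  have "c \<ge> 0"
  proof (rule ccontr)
    assume "\<not> c \<ge> 0"
    define t where "t = sqrt ((\<bar>a\<bar> + 1) / (- c))"
    have "(\<bar>a\<bar> + 1) / (- c) \<ge> 0" using \<open>\<not> c \<ge> 0\<close> by (intro divide_nonneg_pos) auto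
    then have "t^2 = (\<bar>a\<bar> + 1) / (- c)" by (simp add: t_def)
    then have "t^2 * c = - (\<bar>a\<bar> + 1)" using \<open>\<not> c \<ge> 0\<close> by (simp add: field_simps)
    moreover have "0 \<le> a - 2 * t * b + t^2 * c" "0 \<le> a - 2 * (-t) * b + (-t)^2 * c"
      by (rule assms)+
    ultimately show False by simp
  qed
  with False have "c > 0" by simp
  have "0 \<le> a - 2 * (b / c) * b + (b / c)^2 * c" by (rule assms)
  also have "\<dots> = a - b^2 / c" using \<open>c > 0\<close> by (simp add: field_simps power2_eq_square)
  finally show ?thesis using \<open>c > 0\<close> by (simp add: field_simps)
qed

lemma add_le_sqrt_add_sq:
  fixes a b c :: real
  assumes "a \<ge> 0" "c \<ge> 0" "b^2 \<le> a * c"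
  shows "a + 2 * b + c \<le> (sqrt a + sqrt c)^2"
proof -
  have "b \<le> sqrt (a * c)" using assms by (simp add: real_le_rsqrt)
  then show ?thesis using assms by (simp add: power2_eq_square algebra_simps real_sqrt_mult)
qed

lemma add_le_power2_sqrt_add:
  fixes a b c :: real
  assumes "a \<ge> 0" "b \<ge> 0" "c \<ge> 0"
  shows "(sqrt b + sqrt a)^2 + c \<le> (sqrt (b + c) + sqrt a)^2"
proof -
  have "sqrt b * sqrt a \<le> sqrt (b + c) * sqrt a"
    using assms by (intro mult_right_mono) auto
  then show ?thesis using assms by (simp add: power2_eq_square algebra_simps)
qed

lemma power_le_one_plus_power4:
  fixes t :: real
  assumes "0 \<le> t" "n \<le> 4"
  shows "t ^ n \<le> 1 + t ^ 4"
proof (cases "t \<le> 1")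
  case True
  then have "t ^ n \<le> 1" using assms by (simp add: power_le_one)
  then show ?thesis using assms by (simp add: add_increasing2)
next
  case False
  then have "t ^ n \<le> t ^ 4" using assms by (intro power_increasing) auto
  then show ?thesis by simp
qed

lemma inner_square_le: "(u \<bullet> v)^2 \<le> (norm u)^2 * (norm v)^2"
  by (metis Cauchy_Schwarz_ineq2 abs_ge_zero power_mono power_mult_distrib power2_abs)

lemma (in finite_measure) integrable_if_dominated_by_power4:
  fixes F :: "'a \<Rightarrow> 'b::{banach, second_countable_topology}"
  assumes [measurable]: "F \<in> borel_measurable M"
    and "integrable M (\<lambda>x. g x ^ 4)" "\<And>x. g x \<ge> 0" "n \<le> 4" "\<And>x. norm (F x) \<le> g x ^ n"
  shows "integrable M F"
proof (rule Bochner_Integration.integrable_bound[of _ "\<lambda>x. 1 + g x ^ 4"])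
  show "AE x in M. norm (F x) \<le> norm (1 + g x ^ 4)"
    using assms power_le_one_plus_power4 by (auto intro!: AE_I2 order_trans[OF assms(5)])
qed (use assms in auto)

lemma (in finite_measure) integrable_mult_if_square_integrable:
  fixes U V :: "'a \<Rightarrow> real"
  assumes [measurable]: "U \<in> borel_measurable M" "V \<in> borel_measurable M"
    and "integrable M (\<lambda>x. (U x)^2)" "integrable M (\<lambda>x. (V x)^2)"
  shows "integrable M (\<lambda>x. U x * V x)"
proof (rule Bochner_Integration.integrable_bound[of _ "\<lambda>x. (U x)^2 + (V x)^2"])
  have "\<bar>u * v\<bar> \<le> u^2 + v^2" for u v :: real
  proof -
    have "\<bar>u * v\<bar> \<le> 2 * \<bar>u\<bar> * \<bar>v\<bar>" by (simp add: abs_mult)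
    also have "\<dots> \<le> \<bar>u\<bar>^2 + \<bar>v\<bar>^2" by (rule sum_squares_bound)
    finally show ?thesis by simp
  qed
  then show "AE x in M. norm (U x * V x) \<le> norm ((U x)^2 + (V x)^2)" by simp
qed (use assms in simp_all)

lemma (in finite_measure) Cauchy_Schwarz_integral:
  fixes U V :: "'a \<Rightarrow> real"
  assumes [measurable]: "U \<in> borel_measurable M" "V \<in> borel_measurable M"
    and "integrable M (\<lambda>x. (U x)^2)" "integrable M (\<lambda>x. (V x)^2)"
  shows "(\<integral>x. U x * V x \<partial>M)^2 \<le> (\<integral>x. (U x)^2 \<partial>M) * (\<integral>x. (V x)^2 \<partial>M)"
proof (rule discriminant_le_if_quadratic_nonneg)
  fix t :: real
  have "integrable M (\<lambda>x. U x * V x)" by (rule integrable_mult_if_square_integrable) fact+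
  moreover have "(U x - t * V x)^2 = (U x)^2 - 2 * t * (U x * V x) + t^2 * (V x)^2" for x
    by (simp add: power2_eq_square algebra_simps)
  moreover have "0 \<le> (\<integral>x. (U x - t * V x)^2 \<partial>M)" by simp
  ultimately show "0 \<le> (\<integral>x. (U x)^2 \<partial>M) - 2 * t * (\<integral>x. U x * V x \<partial>M) + t^2 * (\<integral>x. (V x)^2 \<partial>M)"
    using assms by simp
qed

lemma (in finite_measure) Minkowski_square_integral:
  fixes U V :: "'a \<Rightarrow> real"
  assumes [measurable]: "U \<in> borel_measurable M" "V \<in> borel_measurable M"
    and "integrable M (\<lambda>x. (U x)^2)" "integrable M (\<lambda>x. (V x)^2)"
  shows "integrable M (\<lambda>x. (U x + V x)^2)"
    and "(\<integral>x. (U x + V x)^2 \<partial>M) \<le> (sqrt (\<integral>x. (U x)^2 \<partial>M) + sqrt (\<integral>x. (V x)^2 \<partial>M))^2"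
proof -
  have "integrable M (\<lambda>x. U x * V x)" by (rule integrable_mult_if_square_integrable) fact+
  moreover have sq: "(U x + V x)^2 = (U x)^2 + 2 * (U x * V x) + (V x)^2" for x
    by (simp add: power2_eq_square algebra_simps)
  ultimately show "integrable M (\<lambda>x. (U x + V x)^2)" using assms by simp
  have "(\<integral>x. (U x + V x)^2 \<partial>M)
      = (\<integral>x. (U x)^2 \<partial>M) + 2 * (\<integral>x. U x * V x \<partial>M) + (\<integral>x. (V x)^2 \<partial>M)"
    unfolding sq using assms \<open>integrable M (\<lambda>x. U x * V x)\<close> by simp
  also have "\<dots> \<le> (sqrt (\<integral>x. (U x)^2 \<partial>M) + sqrt (\<integral>x. (V x)^2 \<partial>M))^2"
    by (rule add_le_sqrt_add_sq) (auto intro!: Cauchy_Schwarz_integral simp: assms)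
  finally show "(\<integral>x. (U x + V x)^2 \<partial>M) \<le> (sqrt (\<integral>x. (U x)^2 \<partial>M) + sqrt (\<integral>x. (V x)^2 \<partial>M))^2" .
qed

section \<open>Functions of independent coordinates\<close>

context pair_prob_space
begin

lemma distr_pair_snd: "distr (M1 \<Otimes>\<^sub>M M2) M2 snd = M2"
proof (intro measure_eqI)
  fix A assume A: "A \<in> sets (distr (M1 \<Otimes>\<^sub>M M2) M2 snd)"
  then have "emeasure (distr (M1 \<Otimes>\<^sub>M M2) M2 snd) A = emeasure (M1 \<Otimes>\<^sub>M M2) (space M1 \<times> A)"
    by (auto simp: emeasure_distr space_pair_measure dest: sets.sets_into_space
        intro!: arg_cong2[where f=emeasure])
  with A show "emeasure (distr (M1 \<Otimes>\<^sub>M M2) M2 snd) A = emeasure M2 A"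
    by (simp add: M2.emeasure_pair_measure_Times M1.emeasure_space_1)
qed simp

lemma
  fixes \<phi> :: "'a \<Rightarrow> 'v::{banach, second_countable_topology}"
  assumes "integrable M1 \<phi>"
  shows integrable_comp_fst: "integrable (M1 \<Otimes>\<^sub>M M2) (\<lambda>z. \<phi> (fst z))"
    and integral_comp_fst: "(\<integral>z. \<phi> (fst z) \<partial>(M1 \<Otimes>\<^sub>M M2)) = integral\<^sup>L M1 \<phi>"
proof -
  have [measurable]: "\<phi> \<in> borel_measurable M1" using assms by auto
  show "integrable (M1 \<Otimes>\<^sub>M M2) (\<lambda>z. \<phi> (fst z))"
    using integrable_distr_eq[of fst "M1 \<Otimes>\<^sub>M M2" M1 \<phi>] assms by (simp add: M2.distr_pair_fst)
  show "(\<integral>z. \<phi> (fst z) \<partial>(M1 \<Otimes>\<^sub>M M2)) = integral\<^sup>L M1 \<phi>"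
    using integral_distr[of fst "M1 \<Otimes>\<^sub>M M2" M1 \<phi>] by (simp add: M2.distr_pair_fst)
qed

lemma
  fixes \<psi> :: "'b \<Rightarrow> 'v::{banach, second_countable_topology}"
  assumes "integrable M2 \<psi>"
  shows integrable_comp_snd: "integrable (M1 \<Otimes>\<^sub>M M2) (\<lambda>z. \<psi> (snd z))"
    and integral_comp_snd: "(\<integral>z. \<psi> (snd z) \<partial>(M1 \<Otimes>\<^sub>M M2)) = integral\<^sup>L M2 \<psi>"
proof -
  have [measurable]: "\<psi> \<in> borel_measurable M2" using assms by auto
  show "integrable (M1 \<Otimes>\<^sub>M M2) (\<lambda>z. \<psi> (snd z))"
    using integrable_distr_eq[of snd "M1 \<Otimes>\<^sub>M M2" M2 \<psi>] assms by (simp add: distr_pair_snd)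
  show "(\<integral>z. \<psi> (snd z) \<partial>(M1 \<Otimes>\<^sub>M M2)) = integral\<^sup>L M2 \<psi>"
    using integral_distr[of snd "M1 \<Otimes>\<^sub>M M2" M2 \<psi>] by (simp add: distr_pair_snd)
qed

lemma
  fixes \<phi> \<psi> :: "_ \<Rightarrow> 'v::euclidean_space"
  assumes \<phi>: "integrable M1 \<phi>" and \<psi>: "integrable M2 \<psi>"
  shows integrable_inner_indep: "integrable (M1 \<Otimes>\<^sub>M M2) (\<lambda>z. \<phi> (fst z) \<bullet> \<psi> (snd z))"
    and integral_inner_indep:
      "(\<integral>z. \<phi> (fst z) \<bullet> \<psi> (snd z) \<partial>(M1 \<Otimes>\<^sub>M M2)) = integral\<^sup>L M1 \<phi> \<bullet> integral\<^sup>L M2 \<psi>"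
proof -
  have [measurable]: "\<phi> \<in> borel_measurable M1" "\<psi> \<in> borel_measurable M2" using assms by auto
  show int: "integrable (M1 \<Otimes>\<^sub>M M2) (\<lambda>z. \<phi> (fst z) \<bullet> \<psi> (snd z))"
  proof (rule Fubini_integrable)
    show "(\<lambda>z. \<phi> (fst z) \<bullet> \<psi> (snd z)) \<in> borel_measurable (M1 \<Otimes>\<^sub>M M2)" by measurable
    show "AE x in M1. integrable M2 (\<lambda>y. \<phi> (fst (x, y)) \<bullet> \<psi> (snd (x, y)))"
      using \<psi> by simp
    show "integrable M1 (\<lambda>x. \<integral>y. norm (\<phi> (fst (x, y)) \<bullet> \<psi> (snd (x, y))) \<partial>M2)"
    proof (rule Bochner_Integration.integrable_bound[of _ "\<lambda>x. norm (\<phi> x) * (\<integral>y. norm (\<psi> y) \<partial>M2)"])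
      show "integrable M1 (\<lambda>x. norm (\<phi> x) * (\<integral>y. norm (\<psi> y) \<partial>M2))" using \<phi> by simp
      show "AE x in M1. norm (\<integral>y. norm (\<phi> (fst (x, y)) \<bullet> \<psi> (snd (x, y))) \<partial>M2)
              \<le> norm (norm (\<phi> x) * (\<integral>y. norm (\<psi> y) \<partial>M2))"
      proof (rule AE_I2)
        fix x
        have "(\<integral>y. norm (\<phi> x \<bullet> \<psi> y) \<partial>M2) \<le> (\<integral>y. norm (\<phi> x) * norm (\<psi> y) \<partial>M2)"
          using \<psi> by (intro integral_mono) (auto simp: Cauchy_Schwarz_ineq2)
        then show "norm (\<integral>y. norm (\<phi> (fst (x, y)) \<bullet> \<psi> (snd (x, y))) \<partial>M2)
              \<le> norm (norm (\<phi> x) * (\<integral>y. norm (\<psi> y) \<partial>M2))"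
          by (simp add: integral_nonneg_AE)
      qed
    qed measurable
  qed
  have "(\<integral>z. \<phi> (fst z) \<bullet> \<psi> (snd z) \<partial>(M1 \<Otimes>\<^sub>M M2)) = (\<integral>x. (\<integral>y. \<phi> x \<bullet> \<psi> y \<partial>M2) \<partial>M1)"
    using integral_fst'[OF int] by simp
  also have "\<dots> = integral\<^sup>L M1 \<phi> \<bullet> integral\<^sup>L M2 \<psi>" using assms by simp
  finally show "(\<integral>z. \<phi> (fst z) \<bullet> \<psi> (snd z) \<partial>(M1 \<Otimes>\<^sub>M M2)) = integral\<^sup>L M1 \<phi> \<bullet> integral\<^sup>L M2 \<psi>" .
qed

lemma
  fixes \<phi> \<psi> :: "_ \<Rightarrow> real"
  assumes "integrable M1 \<phi>" "integrable M2 \<psi>"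
  shows integrable_mult_indep: "integrable (M1 \<Otimes>\<^sub>M M2) (\<lambda>z. \<phi> (fst z) * \<psi> (snd z))"
    and integral_mult_indep:
      "(\<integral>z. \<phi> (fst z) * \<psi> (snd z) \<partial>(M1 \<Otimes>\<^sub>M M2)) = integral\<^sup>L M1 \<phi> * integral\<^sup>L M2 \<psi>"
  using integrable_inner_indep[OF assms] integral_inner_indep[OF assms] by simp_all

end

lemma distr_PiM_two_components:
  assumes M: "\<And>k. k \<in> I \<Longrightarrow> prob_space (M k)" and ij: "i \<in> I" "j \<in> I" "i \<noteq> j"
  shows "distr (PiM I M) (M i \<Otimes>\<^sub>M M j) (\<lambda>x. (x i, x j)) = M i \<Otimes>\<^sub>M M j"
proof (rule pair_measure_eqI[symmetric])
  interpret Mi: prob_space "M i" using M ij by auto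
  interpret Mj: prob_space "M j" using M ij by auto
  show "sigma_finite_measure (M i)" "sigma_finite_measure (M j)"
    by (rule Mi.sigma_finite_measure_axioms Mj.sigma_finite_measure_axioms)+
  show "sets (M i \<Otimes>\<^sub>M M j) = sets (distr (PiM I M) (M i \<Otimes>\<^sub>M M j) (\<lambda>x. (x i, x j)))" by simp
  fix A B assume A: "A \<in> sets (M i)" and B: "B \<in> sets (M j)"
  define F where "F k = (if k = i then A else B)" for k
  have meas: "(\<lambda>x. (x i, x j)) \<in> measurable (PiM I M) (M i \<Otimes>\<^sub>M M j)"
    using ij by measurable
  have "(\<lambda>x. (x i, x j)) -` (A \<times> B) \<inter> space (PiM I M) = prod_emb I M {i, j} (Pi\<^sub>E {i, j} F)"
    using ij by (auto simp: prod_emb_def space_PiM F_def PiE_iff)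
  then have "emeasure (distr (PiM I M) (M i \<Otimes>\<^sub>M M j) (\<lambda>x. (x i, x j))) (A \<times> B)
      = emeasure (PiM I M) (prod_emb I M {i, j} (Pi\<^sub>E {i, j} F))"
    using A B meas by (simp add: emeasure_distr)
  also have "\<dots> = (\<Prod>k\<in>{i, j}. emeasure (M k) (F k))"
    using ij A B by (intro emeasure_PiM_emb M) (auto simp: F_def)
  also have "\<dots> = emeasure (M i) A * emeasure (M j) B" using ij by (simp add: F_def)
  finally show "emeasure (M i) A * emeasure (M j) B
      = emeasure (distr (PiM I M) (M i \<Otimes>\<^sub>M M j) (\<lambda>x. (x i, x j))) (A \<times> B)" by simp
qed

lemma measure_PiM_two_components:
  assumes M: "\<And>k. k \<in> I \<Longrightarrow> prob_space (M k)" and N: "prob_space N"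
    and ij: "i \<in> I" "j \<in> I" "i \<noteq> j" and A: "A \<in> sets ((M i \<Otimes>\<^sub>M M j) \<Otimes>\<^sub>M N)"
  shows "measure (PiM I M \<Otimes>\<^sub>M N) ((\<lambda>(x, z). ((x i, x j), z)) -` A \<inter> space (PiM I M \<Otimes>\<^sub>M N))
    = measure ((M i \<Otimes>\<^sub>M M j) \<Otimes>\<^sub>M N) A"
proof -
  interpret N: prob_space N by fact
  have proj: "(\<lambda>x. (x i, x j)) \<in> measurable (PiM I M) (M i \<Otimes>\<^sub>M M j)"
    using ij by measurable
  have h: "(\<lambda>(x, z). ((x i, x j), z)) \<in> measurable (PiM I M \<Otimes>\<^sub>M N) ((M i \<Otimes>\<^sub>M M j) \<Otimes>\<^sub>M N)"
    using proj by measurable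
  have "distr (PiM I M \<Otimes>\<^sub>M N) ((M i \<Otimes>\<^sub>M M j) \<Otimes>\<^sub>M N) (\<lambda>(x, z). ((x i, x j), z))
      = distr (PiM I M) (M i \<Otimes>\<^sub>M M j) (\<lambda>x. (x i, x j)) \<Otimes>\<^sub>M distr N N (\<lambda>z. z)"
    by (rule pair_measure_distr[OF proj, symmetric]) (simp_all add: N.sigma_finite_measure_axioms)
  also have "\<dots> = (M i \<Otimes>\<^sub>M M j) \<Otimes>\<^sub>M N"
    using distr_PiM_two_components[of I M i j] M ij by simp
  finally show ?thesis
    using measure_distr[OF h, of A] A by simp
qed

section \<open>Centred random vectors with finite fourth moment\<close>

lemma norm_add_power4_eq:
  fixes x y :: "'v::real_inner"
  shows "(norm (x + y))^4 = (norm x)^4 + (norm y)^4 + 4 * (x \<bullet> y)^2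
    + 2 * ((norm x)^2 * (norm y)^2) + 4 * (x \<bullet> ((norm y)^2 *\<^sub>R y)) + 4 * (((norm x)^2 *\<^sub>R x) \<bullet> y)"
proof -
  have "(norm (x + y))^4 = ((norm (x + y))^2)^2" by simp
  also have "\<dots> = ((norm x)^2 + 2 * (x \<bullet> y) + (norm y)^2)^2"
    by (simp add: power2_norm_eq_inner inner_add inner_commute algebra_simps)
  finally have "(norm (x + y))^4 = ((norm x)^2 + 2 * (x \<bullet> y) + (norm y)^2)^2" .
  then show ?thesis by (simp add: power2_eq_square power4_eq_xxxx algebra_simps)
qed

locale centred_fourth_moment = prob_space M for M :: "'a measure" +
  fixes X :: "'a \<Rightarrow> 'v::euclidean_space"
  assumes measurable_X [measurable]: "X \<in> borel_measurable M"
    and integrable_fourth: "integrable M (\<lambda>x. (norm (X x))^4)"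
    and mean_zero: "integral\<^sup>L M X = 0"
begin

definition "second_moment = (\<integral>x. (norm (X x))^2 \<partial>M)"
definition "fourth_moment = (\<integral>x. (norm (X x))^4 \<partial>M)"

lemma integrable_X: "integrable M X"
  by (rule integrable_if_dominated_by_power4[where n = 1]) (use integrable_fourth in auto)

lemma integrable_second: "integrable M (\<lambda>x. (norm (X x))^2)"
  by (rule integrable_if_dominated_by_power4[where n = 2]) (use integrable_fourth in auto)

lemma integrable_third: "integrable M (\<lambda>x. (norm (X x))^2 *\<^sub>R X x)"
  by (rule integrable_if_dominated_by_power4[where n = 3])
    (use integrable_fourth in \<open>auto simp: power3_eq_cube power2_eq_square\<close>)

lemma second_moment_nonneg: "second_moment \<ge> 0"
  unfolding second_moment_def by simp

lemma fourth_moment_nonneg: "fourth_moment \<ge> 0"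
  unfolding fourth_moment_def by simp

lemma centred_fourth_moment_scaleR: "centred_fourth_moment M (\<lambda>x. c *\<^sub>R X x)"
  using integrable_fourth mean_zero
  by unfold_locales (simp_all add: power_mult_distrib prob_space_axioms)

end

lemma centred_fourth_moment_distr:
  assumes "centred_fourth_moment M (\<lambda>x. Z (h x))"
    and [measurable]: "h \<in> measurable M N" "Z \<in> borel_measurable N"
  shows "centred_fourth_moment (distr M N h) Z"
proof -
  interpret centred_fourth_moment M "\<lambda>x. Z (h x)" by fact
  show ?thesis
  proof (rule centred_fourth_moment.intro)
    show "prob_space (distr M N h)" by (rule prob_space_distr) fact
    show "centred_fourth_moment_axioms (distr M N h) Z"
      using integrable_fourth mean_zero
      by unfold_locales (simp_all add: integrable_distr_eq integral_distr)
  qed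
qed

lemma (in pair_prob_space) indep_centred_cross_moments:
  fixes X :: "'a \<Rightarrow> 'v::euclidean_space" and Y :: "'b \<Rightarrow> 'v"
  assumes "centred_fourth_moment M1 X" "centred_fourth_moment M2 Y"
  shows "integrable (M1 \<Otimes>\<^sub>M M2) (\<lambda>z. X (fst z) \<bullet> Y (snd z))"
    and "(\<integral>z. X (fst z) \<bullet> Y (snd z) \<partial>(M1 \<Otimes>\<^sub>M M2)) = 0"
    and "integrable (M1 \<Otimes>\<^sub>M M2) (\<lambda>z. X (fst z) \<bullet> ((norm (Y (snd z)))^2 *\<^sub>R Y (snd z)))"
    and "(\<integral>z. X (fst z) \<bullet> ((norm (Y (snd z)))^2 *\<^sub>R Y (snd z)) \<partial>(M1 \<Otimes>\<^sub>M M2)) = 0"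
    and "integrable (M1 \<Otimes>\<^sub>M M2) (\<lambda>z. ((norm (X (fst z)))^2 *\<^sub>R X (fst z)) \<bullet> Y (snd z))"
    and "(\<integral>z. ((norm (X (fst z)))^2 *\<^sub>R X (fst z)) \<bullet> Y (snd z) \<partial>(M1 \<Otimes>\<^sub>M M2)) = 0"
    and "integrable (M1 \<Otimes>\<^sub>M M2) (\<lambda>z. (norm (X (fst z)))^2 * (norm (Y (snd z)))^2)"
    and "(\<integral>z. (norm (X (fst z)))^2 * (norm (Y (snd z)))^2 \<partial>(M1 \<Otimes>\<^sub>M M2))
          = (\<integral>x. (norm (X x))^2 \<partial>M1) * (\<integral>y. (norm (Y y))^2 \<partial>M2)"
    and "integrable (M1 \<Otimes>\<^sub>M M2) (\<lambda>z. (X (fst z) \<bullet> Y (snd z))^2)"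
    and "(\<integral>z. (X (fst z) \<bullet> Y (snd z))^2 \<partial>(M1 \<Otimes>\<^sub>M M2))
          \<le> (\<integral>x. (norm (X x))^2 \<partial>M1) * (\<integral>y. (norm (Y y))^2 \<partial>M2)"
proof -
  interpret X: centred_fourth_moment M1 X by fact
  interpret Y: centred_fourth_moment M2 Y by fact
  show "integrable (M1 \<Otimes>\<^sub>M M2) (\<lambda>z. X (fst z) \<bullet> Y (snd z))"
    "(\<integral>z. X (fst z) \<bullet> Y (snd z) \<partial>(M1 \<Otimes>\<^sub>M M2)) = 0"
    "integrable (M1 \<Otimes>\<^sub>M M2) (\<lambda>z. X (fst z) \<bullet> ((norm (Y (snd z)))^2 *\<^sub>R Y (snd z)))"
    "(\<integral>z. X (fst z) \<bullet> ((norm (Y (snd z)))^2 *\<^sub>R Y (snd z)) \<partial>(M1 \<Otimes>\<^sub>M M2)) = 0"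
    "integrable (M1 \<Otimes>\<^sub>M M2) (\<lambda>z. ((norm (X (fst z)))^2 *\<^sub>R X (fst z)) \<bullet> Y (snd z))"
    "(\<integral>z. ((norm (X (fst z)))^2 *\<^sub>R X (fst z)) \<bullet> Y (snd z) \<partial>(M1 \<Otimes>\<^sub>M M2)) = 0"
    using integrable_inner_indep[OF X.integrable_X Y.integrable_X]
      integral_inner_indep[OF X.integrable_X Y.integrable_X]
      integrable_inner_indep[OF X.integrable_X Y.integrable_third]
      integral_inner_indep[OF X.integrable_X Y.integrable_third]
      integrable_inner_indep[OF X.integrable_third Y.integrable_X]
      integral_inner_indep[OF X.integrable_third Y.integrable_X]
    by (simp_all add: X.mean_zero Y.mean_zero)
  show sq: "integrable (M1 \<Otimes>\<^sub>M M2) (\<lambda>z. (norm (X (fst z)))^2 * (norm (Y (snd z)))^2)"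
    "(\<integral>z. (norm (X (fst z)))^2 * (norm (Y (snd z)))^2 \<partial>(M1 \<Otimes>\<^sub>M M2))
      = (\<integral>x. (norm (X x))^2 \<partial>M1) * (\<integral>y. (norm (Y y))^2 \<partial>M2)"
    by (fact integrable_mult_indep[OF X.integrable_second Y.integrable_second]
        integral_mult_indep[OF X.integrable_second Y.integrable_second])+
  show inner_sq: "integrable (M1 \<Otimes>\<^sub>M M2) (\<lambda>z. (X (fst z) \<bullet> Y (snd z))^2)"
    by (rule Bochner_Integration.integrable_bound[OF sq(1)])
      (auto intro!: AE_I2 simp: inner_square_le)
  show "(\<integral>z. (X (fst z) \<bullet> Y (snd z))^2 \<partial>(M1 \<Otimes>\<^sub>M M2))
      \<le> (\<integral>x. (norm (X x))^2 \<partial>M1) * (\<integral>y. (norm (Y y))^2 \<partial>M2)"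
    unfolding sq(2)[symmetric] by (rule integral_mono[OF inner_sq sq(1) inner_square_le])
qed

lemma (in pair_prob_space) centred_fourth_moment_indep_add:
  fixes X :: "'a \<Rightarrow> 'v::euclidean_space" and Y :: "'b \<Rightarrow> 'v"
  assumes "centred_fourth_moment M1 X" "centred_fourth_moment M2 Y"
  shows "centred_fourth_moment (M1 \<Otimes>\<^sub>M M2) (\<lambda>z. X (fst z) + Y (snd z))"
    and "(\<integral>z. (norm (X (fst z) + Y (snd z)))^2 \<partial>(M1 \<Otimes>\<^sub>M M2))
          = (\<integral>x. (norm (X x))^2 \<partial>M1) + (\<integral>y. (norm (Y y))^2 \<partial>M2)"
    and "(\<integral>z. (norm (X (fst z) + Y (snd z)))^4 \<partial>(M1 \<Otimes>\<^sub>M M2))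
          \<le> (\<integral>x. (norm (X x))^4 \<partial>M1) + (\<integral>y. (norm (Y y))^4 \<partial>M2)
            + 6 * ((\<integral>x. (norm (X x))^2 \<partial>M1) * (\<integral>y. (norm (Y y))^2 \<partial>M2))"
proof -
  interpret X: centred_fourth_moment M1 X by fact
  interpret Y: centred_fourth_moment M2 Y by fact
  note cross = indep_centred_cross_moments[OF assms]
  note X = integrable_comp_fst[OF X.integrable_X] integral_comp_fst[OF X.integrable_X]
    integrable_comp_fst[OF X.integrable_second] integral_comp_fst[OF X.integrable_second]
    integrable_comp_fst[OF X.integrable_fourth] integral_comp_fst[OF X.integrable_fourth]
  note Y = integrable_comp_snd[OF Y.integrable_X] integral_comp_snd[OF Y.integrable_X]
    integrable_comp_snd[OF Y.integrable_second] integral_comp_snd[OF Y.integrable_second]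
    integrable_comp_snd[OF Y.integrable_fourth] integral_comp_snd[OF Y.integrable_fourth]
  have sq2: "(norm (x + y))^2 = (norm x)^2 + 2 * (x \<bullet> y) + (norm y)^2" for x y :: 'v
    by (simp add: power2_norm_eq_inner inner_add inner_commute)
  note sq4 = norm_add_power4_eq[of "X (fst z)" "Y (snd z)" for z]
  have "integrable (M1 \<Otimes>\<^sub>M M2) (\<lambda>z. (norm (X (fst z) + Y (snd z)))^4)"
    unfolding sq4 using X Y cross by simp
  then show "centred_fourth_moment (M1 \<Otimes>\<^sub>M M2) (\<lambda>z. X (fst z) + Y (snd z))"
    using X Y by unfold_locales (simp_all add: X.mean_zero Y.mean_zero)
  show "(\<integral>z. (norm (X (fst z) + Y (snd z)))^2 \<partial>(M1 \<Otimes>\<^sub>M M2))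
          = (\<integral>x. (norm (X x))^2 \<partial>M1) + (\<integral>y. (norm (Y y))^2 \<partial>M2)"
    unfolding sq2 using X Y cross by simp
  show "(\<integral>z. (norm (X (fst z) + Y (snd z)))^4 \<partial>(M1 \<Otimes>\<^sub>M M2))
          \<le> (\<integral>x. (norm (X x))^4 \<partial>M1) + (\<integral>y. (norm (Y y))^4 \<partial>M2)
            + 6 * ((\<integral>x. (norm (X x))^2 \<partial>M1) * (\<integral>y. (norm (Y y))^2 \<partial>M2))"
    unfolding sq4 using X Y cross by simp
qed

section \<open>Sample means\<close>

context centred_fourth_moment
begin

definition iid :: "nat \<Rightarrow> (nat \<Rightarrow> 'a) measure"
  where "iid k = PiM {..<k} (\<lambda>_. M)"

definition sample_sum :: "nat \<Rightarrow> (nat \<Rightarrow> 'a) \<Rightarrow> 'v"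
  where "sample_sum k xs = (\<Sum>s<k. X (xs s))"

definition sample_mean :: "nat \<Rightarrow> (nat \<Rightarrow> 'a) \<Rightarrow> 'v"
  where "sample_mean m xs = (1 / real m) *\<^sub>R sample_sum m xs"

lemma prob_space_iid: "prob_space (iid k)"
  unfolding iid_def by (rule prob_space_PiM) (rule prob_space_axioms)

lemma measurable_sample_sum [measurable]: "sample_sum k \<in> borel_measurable (iid k)"
  unfolding sample_sum_def iid_def by measurable

lemma measurable_sample_mean [measurable]: "sample_mean m \<in> borel_measurable (iid m)"
  unfolding sample_mean_def by measurable

lemma measurable_iid_extend [measurable]:
  "(\<lambda>(x, xs). xs(k := x)) \<in> measurable (M \<Otimes>\<^sub>M iid k) (iid (Suc k))"
  unfolding iid_def lessThan_Suc by measurable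

lemma iid_Suc: "iid (Suc k) = distr (M \<Otimes>\<^sub>M iid k) (iid (Suc k)) (\<lambda>(x, xs). xs(k := x))"
  using distr_pair_PiM_eq_PiM[of "{..<k}" "\<lambda>_. M" k] prob_space_axioms
  by (simp add: iid_def lessThan_Suc)

lemma sample_sum_extend: "sample_sum (Suc k) (xs(k := x)) = X x + sample_sum k xs"
  unfolding sample_sum_def by (simp add: add.commute)

lemma sample_sum_moments:
  fixes k :: nat
  shows "centred_fourth_moment (iid k) (sample_sum k) \<and>
   (\<integral>xs. (norm (sample_sum k xs))^2 \<partial>iid k) = real k * second_moment \<and>
   (\<integral>xs. (norm (sample_sum k xs))^4 \<partial>iid k)
     \<le> real k * fourth_moment + 3 * real k * (real k - 1) * second_moment^2"
proof (induction k)
  case 0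
  have "sample_sum 0 = (\<lambda>xs. 0)" by (simp add: sample_sum_def[abs_def])
  then show ?case
    by (simp add: centred_fourth_moment_def centred_fourth_moment_axioms_def prob_space_iid)
next
  case (Suc k)
  interpret pair_prob_space M "iid k"
    by (simp add: pair_prob_space_def pair_sigma_finite_def prob_space_iid prob_space_axioms
        prob_space_imp_sigma_finite)
  let ?e = "\<lambda>(x, xs). xs(k := x)"
  have S: "sample_sum (Suc k) (?e z) = X (fst z) + sample_sum k (snd z)" for z
    by (simp add: case_prod_beta sample_sum_extend)
  from Suc.IH have IH: "centred_fourth_moment (iid k) (sample_sum k)"
    "(\<integral>xs. (norm (sample_sum k xs))^2 \<partial>iid k) = real k * second_moment"
    "(\<integral>xs. (norm (sample_sum k xs))^4 \<partial>iid k)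
       \<le> real k * fourth_moment + 3 * real k * (real k - 1) * second_moment^2"
    by auto
  note sum = centred_fourth_moment_indep_add[OF centred_fourth_moment_axioms IH(1)]
  have "centred_fourth_moment (iid (Suc k)) (sample_sum (Suc k))"
    by (subst iid_Suc, rule centred_fourth_moment_distr) (use sum(1) S in simp_all)
  moreover have moment: "(\<integral>xs. (norm (sample_sum (Suc k) xs))^n \<partial>iid (Suc k))
      = (\<integral>z. (norm (X (fst z) + sample_sum k (snd z)))^n \<partial>(M \<Otimes>\<^sub>M iid k))" for n
    by (subst iid_Suc, subst integral_distr) (simp_all add: S)
  moreover have "(\<integral>xs. (norm (sample_sum (Suc k) xs))^2 \<partial>iid (Suc k))
      = real (Suc k) * second_moment"
    unfolding moment sum(2) IH(2) second_moment_def by (simp add: algebra_simps)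
  moreover have "(\<integral>xs. (norm (sample_sum (Suc k) xs))^4 \<partial>iid (Suc k))
      \<le> fourth_moment + (real k * fourth_moment + 3 * real k * (real k - 1) * second_moment^2)
        + 6 * (second_moment * (real k * second_moment))"
    using sum(3) IH(3)
    unfolding moment IH(2) second_moment_def[symmetric] fourth_moment_def[symmetric]
    by linarith
  ultimately show ?case by (simp add: algebra_simps power2_eq_square)
qed

lemma
  assumes "m > 0"
  shows centred_sample_mean: "centred_fourth_moment (iid m) (sample_mean m)"
    and second_moment_sample_mean:
      "(\<integral>xs. (norm (sample_mean m xs))^2 \<partial>iid m) = second_moment / real m"
    and fourth_moment_sample_mean:
      "(\<integral>xs. (norm (sample_mean m xs))^4 \<partial>iid m)
         \<le> (fourth_moment + 3 * (real m - 1) * second_moment^2) / real m ^ 3"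
proof -
  interpret S: centred_fourth_moment "iid m" "sample_sum m"
    using sample_sum_moments by blast
  show "centred_fourth_moment (iid m) (sample_mean m)"
    unfolding sample_mean_def[abs_def] by (rule S.centred_fourth_moment_scaleR)
  have "(norm (sample_mean m xs))^n = (norm (sample_sum m xs))^n / real m ^ n" for n xs
    by (simp add: sample_mean_def power_divide)
  then have moment: "(\<integral>xs. (norm (sample_mean m xs))^n \<partial>iid m)
      = (\<integral>xs. (norm (sample_sum m xs))^n \<partial>iid m) / real m ^ n" for n
    by simp
  show "(\<integral>xs. (norm (sample_mean m xs))^2 \<partial>iid m) = second_moment / real m"
    unfolding moment using sample_sum_moments[of m] assms by (simp add: power2_eq_square)
  have "(\<integral>xs. (norm (sample_mean m xs))^4 \<partial>iid m)
      \<le> (real m * fourth_moment + 3 * real m * (real m - 1) * second_moment^2) / real m ^ 4"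
    unfolding moment using sample_sum_moments[of m] by (simp add: divide_right_mono)
  also have "\<dots> = (fourth_moment + 3 * (real m - 1) * second_moment^2) / real m ^ 3"
    using assms by (simp add: field_simps power4_eq_xxxx power3_eq_cube)
  finally show "(\<integral>xs. (norm (sample_mean m xs))^4 \<partial>iid m)
         \<le> (fourth_moment + 3 * (real m - 1) * second_moment^2) / real m ^ 3" .
qed

definition sq_mean_excess :: "nat \<Rightarrow> (nat \<Rightarrow> 'a) \<Rightarrow> real"
  where "sq_mean_excess m xs = (norm (sample_mean m xs))^2 - second_moment / real m"

lemma measurable_sq_mean_excess [measurable]: "sq_mean_excess m \<in> borel_measurable (iid m)"
  unfolding sq_mean_excess_def by measurable

lemma
  assumes "m > 0"
  shows integrable_sq_mean_excess: "integrable (iid m) (sq_mean_excess m)"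
    and integral_sq_mean_excess: "integral\<^sup>L (iid m) (sq_mean_excess m) = 0"
    and integrable_sq_mean_excess_sq: "integrable (iid m) (\<lambda>xs. (sq_mean_excess m xs)^2)"
    and integral_sq_mean_excess_sq:
      "(\<integral>xs. (sq_mean_excess m xs)^2 \<partial>iid m)
         \<le> (fourth_moment + (2 * real m - 3) * second_moment^2) / real m ^ 3"
proof -
  interpret A: centred_fourth_moment "iid m" "sample_mean m"
    using centred_sample_mean[OF assms] .
  note A.integrable_second[simp] A.integrable_fourth[simp]
  show "integrable (iid m) (sq_mean_excess m)"
    unfolding sq_mean_excess_def[abs_def] by simp
  show "integral\<^sup>L (iid m) (sq_mean_excess m) = 0"
    unfolding sq_mean_excess_def[abs_def] using second_moment_sample_mean[OF assms]
    by (simp add: A.prob_space)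
  have sq: "(sq_mean_excess m xs)^2 = (norm (sample_mean m xs))^4
      - 2 * (second_moment / real m) * (norm (sample_mean m xs))^2
      + (second_moment / real m)^2" for xs
    unfolding sq_mean_excess_def by (simp add: power2_eq_square power4_eq_xxxx algebra_simps)
  show "integrable (iid m) (\<lambda>xs. (sq_mean_excess m xs)^2)"
    unfolding sq by simp
  have "(\<integral>xs. (sq_mean_excess m xs)^2 \<partial>iid m)
      = (\<integral>xs. (norm (sample_mean m xs))^4 \<partial>iid m)
        - 2 * (second_moment / real m) * (\<integral>xs. (norm (sample_mean m xs))^2 \<partial>iid m)
        + (second_moment / real m)^2"
    unfolding sq by (simp add: A.prob_space)
  also have "\<dots> = (\<integral>xs. (norm (sample_mean m xs))^4 \<partial>iid m) - (second_moment / real m)^2"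
    unfolding second_moment_sample_mean[OF assms] by (simp add: power2_eq_square)
  also have "\<dots> \<le> (fourth_moment + 3 * (real m - 1) * second_moment^2) / real m ^ 3
      - (second_moment / real m)^2"
    using fourth_moment_sample_mean[OF assms] by simp
  also have "\<dots> = (fourth_moment + (2 * real m - 3) * second_moment^2) / real m ^ 3"
    using assms by (simp add: field_simps power2_eq_square power3_eq_cube)
  finally show "(\<integral>xs. (sq_mean_excess m xs)^2 \<partial>iid m)
      \<le> (fourth_moment + (2 * real m - 3) * second_moment^2) / real m ^ 3" .
qed

end

section \<open>The margin between two classes\<close>

text \<open>
  Xa and Xb are the features of classes i and j centred at their means mu_i and mu_j, and
  \<delta> = mu_j - mu_i. An episode consists of m support points of each class and a test point
  of class i; margin is \<Delta>_{i->j}, and margin_noise is its deviation from the mean.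
\<close>
locale ncc_pair = a: centred_fourth_moment Ma Xa + b: centred_fourth_moment Mb Xb
  for Ma :: "'a measure" and Xa :: "'a \<Rightarrow> 'v::euclidean_space"
    and Mb :: "'b measure" and Xb :: "'b \<Rightarrow> 'v" +
  fixes m :: nat and \<delta> :: 'v
  assumes m_pos: "m > 0"
begin

definition "supports = a.iid m \<Otimes>\<^sub>M b.iid m"
definition "episode = supports \<Otimes>\<^sub>M Ma"

definition margin :: "((nat \<Rightarrow> 'a) \<times> (nat \<Rightarrow> 'b)) \<times> 'a \<Rightarrow> real" where
  "margin \<omega> = (norm (Xa (snd \<omega>) - \<delta> - b.sample_mean m (snd (fst \<omega>))))^2
     - (norm (Xa (snd \<omega>) - a.sample_mean m (fst (fst \<omega>))))^2"

definition "expected_margin = (norm \<delta>)^2 + (b.second_moment - a.second_moment) / real m"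

definition "centroid_error s = b.sample_mean m (snd s) - a.sample_mean m (fst s)"

definition "support_noise s =
  2 * (\<delta> \<bullet> b.sample_mean m (snd s)) + b.sq_mean_excess m (snd s) - a.sq_mean_excess m (fst s)"

definition "margin_noise \<omega> =
  support_noise (fst \<omega>) - 2 * (Xa (snd \<omega>) \<bullet> (\<delta> + centroid_error (fst \<omega>)))"

definition "dir_var u = (\<integral>z. (u \<bullet> Xa z)^2 \<partial>Ma)"

lemma pair_prob_space_supports: "pair_prob_space (a.iid m) (b.iid m)"
  by (simp add: pair_prob_space_def pair_sigma_finite_def a.prob_space_iid b.prob_space_iid
      prob_space_imp_sigma_finite)

lemma pair_prob_space_episode: "pair_prob_space supports Ma"
proof -
  interpret pair_prob_space "a.iid m" "b.iid m" by (rule pair_prob_space_supports)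
  show ?thesis
    by (simp add: pair_prob_space_def pair_sigma_finite_def supports_def prob_space_axioms
        a.prob_space_axioms prob_space_imp_sigma_finite)
qed

lemma measurable_centroid_error [measurable]: "centroid_error \<in> borel_measurable supports"
  unfolding centroid_error_def supports_def by measurable

lemma measurable_support_noise [measurable]: "support_noise \<in> borel_measurable supports"
  unfolding support_noise_def supports_def by measurable

lemma measurable_margin [measurable]: "margin \<in> borel_measurable episode"
  unfolding margin_def episode_def supports_def by measurable

lemma measurable_margin_noise [measurable]: "margin_noise \<in> borel_measurable episode"
  unfolding margin_noise_def episode_def by measurable

lemma margin_eq: "margin \<omega> = expected_margin + margin_noise \<omega>"
  unfolding margin_def expected_margin_def margin_noise_def support_noise_def centroid_error_def
    a.sq_mean_excess_def b.sq_mean_excess_def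
  by (simp add: power2_norm_eq_inner inner_diff_left inner_diff_right inner_add_left
      inner_add_right inner_commute algebra_simps diff_divide_distrib)

lemma
  shows integrable_centroid_error: "integrable supports centroid_error"
    and integral_centroid_error: "integral\<^sup>L supports centroid_error = 0"
    and integrable_centroid_error_sq: "integrable supports (\<lambda>s. (norm (centroid_error s))^2)"
    and integral_centroid_error_sq:
      "(\<integral>s. (norm (centroid_error s))^2 \<partial>supports) = (a.second_moment + b.second_moment) / real m"
proof -
  interpret pair_prob_space "a.iid m" "b.iid m" by (rule pair_prob_space_supports)
  interpret A: centred_fourth_moment "a.iid m" "a.sample_mean m"
    by (rule a.centred_sample_mean[OF m_pos])
  interpret B: centred_fourth_moment "b.iid m" "b.sample_mean m"
    by (rule b.centred_sample_mean[OF m_pos])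
  have "centred_fourth_moment supports (\<lambda>s. (- a.sample_mean m (fst s)) + b.sample_mean m (snd s))"
    unfolding supports_def
    using centred_fourth_moment_indep_add(1)[OF A.centred_fourth_moment_scaleR[of "-1"]
        B.centred_fourth_moment_axioms] by simp
  then interpret E: centred_fourth_moment supports centroid_error
    by (simp add: centroid_error_def[abs_def])
  show "integrable supports centroid_error" "integral\<^sup>L supports centroid_error = 0"
    "integrable supports (\<lambda>s. (norm (centroid_error s))^2)"
    by (fact E.integrable_X E.mean_zero E.integrable_second)+
  show "(\<integral>s. (norm (centroid_error s))^2 \<partial>supports) = (a.second_moment + b.second_moment) / real m"
    using centred_fourth_moment_indep_add(2)[OF A.centred_fourth_moment_scaleR[of "-1"]
        B.centred_fourth_moment_axioms]
    by (simp add: supports_def centroid_error_def a.second_moment_sample_mean[OF m_pos]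
        b.second_moment_sample_mean[OF m_pos] add_divide_distrib)
qed

lemma
  shows integrable_support_noise_linear_sq:
      "integrable supports (\<lambda>s. (2 * (\<delta> \<bullet> b.sample_mean m (snd s)))^2)"
    and integral_support_noise_linear_sq_le:
      "(\<integral>s. (2 * (\<delta> \<bullet> b.sample_mean m (snd s)))^2 \<partial>supports)
         \<le> 4 * (norm \<delta>)^2 * b.second_moment / real m"
proof -
  interpret pair_prob_space "a.iid m" "b.iid m" by (rule pair_prob_space_supports)
  interpret B: centred_fourth_moment "b.iid m" "b.sample_mean m"
    by (rule b.centred_sample_mean[OF m_pos])
  have le: "(2 * (\<delta> \<bullet> b.sample_mean m (snd s)))^2
      \<le> 4 * (norm \<delta>)^2 * (norm (b.sample_mean m (snd s)))^2" for s
    using inner_square_le[of \<delta> "b.sample_mean m (snd s)"] by (simp add: power_mult_distrib)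
  have B2: "integrable supports (\<lambda>s. (norm (b.sample_mean m (snd s)))^2)"
    "(\<integral>s. (norm (b.sample_mean m (snd s)))^2 \<partial>supports) = b.second_moment / real m"
    unfolding supports_def
    using integrable_comp_snd[OF B.integrable_second] integral_comp_snd[OF B.integrable_second]
    by (simp_all add: b.second_moment_sample_mean[OF m_pos])
  show int: "integrable supports (\<lambda>s. (2 * (\<delta> \<bullet> b.sample_mean m (snd s)))^2)"
    by (rule Bochner_Integration.integrable_bound[OF
          integrable_mult_right[OF B2(1), of "4 * (norm \<delta>)^2"]])
      (auto simp: supports_def inner_square_le intro!: AE_I2)
  have "(\<integral>s. (2 * (\<delta> \<bullet> b.sample_mean m (snd s)))^2 \<partial>supports)
      \<le> (\<integral>s. 4 * (norm \<delta>)^2 * (norm (b.sample_mean m (snd s)))^2 \<partial>supports)"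
    using int B2(1) le by (intro integral_mono) auto
  then show "(\<integral>s. (2 * (\<delta> \<bullet> b.sample_mean m (snd s)))^2 \<partial>supports)
      \<le> 4 * (norm \<delta>)^2 * b.second_moment / real m"
    using B2(2) by simp
qed

lemma
  shows integrable_support_noise_quadratic_sq:
      "integrable supports (\<lambda>s. (b.sq_mean_excess m (snd s) - a.sq_mean_excess m (fst s))^2)"
    and integral_support_noise_quadratic_sq_le:
      "(\<integral>s. (b.sq_mean_excess m (snd s) - a.sq_mean_excess m (fst s))^2 \<partial>supports)
         \<le> (a.fourth_moment + b.fourth_moment
             + (2 * real m - 3) * (a.second_moment^2 + b.second_moment^2)) / real m ^ 3"
proof -
  interpret pair_prob_space "a.iid m" "b.iid m" by (rule pair_prob_space_supports)
  note Pa = a.integrable_sq_mean_excess[OF m_pos] a.integral_sq_mean_excess[OF m_pos]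
    a.integrable_sq_mean_excess_sq[OF m_pos] a.integral_sq_mean_excess_sq[OF m_pos]
  note Pb = b.integrable_sq_mean_excess[OF m_pos] b.integral_sq_mean_excess[OF m_pos]
    b.integrable_sq_mean_excess_sq[OF m_pos] b.integral_sq_mean_excess_sq[OF m_pos]
  have sq: "(q - p)^2 = q^2 + p^2 - 2 * (p * q)" for p q :: real
    by (simp add: power2_eq_square algebra_simps)
  note parts = integrable_comp_fst[OF Pa(3)] integral_comp_fst[OF Pa(3)]
    integrable_comp_snd[OF Pb(3)] integral_comp_snd[OF Pb(3)]
    integrable_mult_indep[OF Pa(1) Pb(1)] integral_mult_indep[OF Pa(1) Pb(1)]
  show "integrable supports (\<lambda>s. (b.sq_mean_excess m (snd s) - a.sq_mean_excess m (fst s))^2)"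
    unfolding sq supports_def using parts by simp
  have "(\<integral>s. (b.sq_mean_excess m (snd s) - a.sq_mean_excess m (fst s))^2 \<partial>supports)
      = (\<integral>ys. (b.sq_mean_excess m ys)^2 \<partial>b.iid m) + (\<integral>xs. (a.sq_mean_excess m xs)^2 \<partial>a.iid m)"
    unfolding sq supports_def using parts Pa(2) by simp
  also have "\<dots> \<le> (b.fourth_moment + (2 * real m - 3) * b.second_moment^2) / real m ^ 3
      + (a.fourth_moment + (2 * real m - 3) * a.second_moment^2) / real m ^ 3"
    by (intro add_mono Pa(4) Pb(4))
  also have "\<dots> = (a.fourth_moment + b.fourth_moment
      + (2 * real m - 3) * (a.second_moment^2 + b.second_moment^2)) / real m ^ 3"
    by (simp add: add_divide_distrib[symmetric] algebra_simps)
  finally show "(\<integral>s. (b.sq_mean_excess m (snd s) - a.sq_mean_excess m (fst s))^2 \<partial>supports)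
      \<le> (a.fourth_moment + b.fourth_moment
          + (2 * real m - 3) * (a.second_moment^2 + b.second_moment^2)) / real m ^ 3" .
qed

lemma
  shows integrable_support_noise_sq: "integrable supports (\<lambda>s. (support_noise s)^2)"
    and integral_support_noise_sq_le: "(\<integral>s. (support_noise s)^2 \<partial>supports)
      \<le> (sqrt (4 * (norm \<delta>)^2 * b.second_moment / real m)
          + sqrt ((a.fourth_moment + b.fourth_moment
                   + (2 * real m - 3) * (a.second_moment^2 + b.second_moment^2)) / real m ^ 3))^2"
proof -
  interpret S: prob_space supports
    unfolding supports_def by (intro prob_space_pair a.prob_space_iid b.prob_space_iid)
  have noise: "support_noise s = 2 * (\<delta> \<bullet> b.sample_mean m (snd s))
      + (b.sq_mean_excess m (snd s) - a.sq_mean_excess m (fst s))" for s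
    unfolding support_noise_def by simp
  have [measurable]: "(\<lambda>s. 2 * (\<delta> \<bullet> b.sample_mean m (snd s))) \<in> borel_measurable supports"
    "(\<lambda>s. b.sq_mean_excess m (snd s) - a.sq_mean_excess m (fst s)) \<in> borel_measurable supports"
    unfolding supports_def by measurable
  note Minkowski = S.Minkowski_square_integral[OF _ _ integrable_support_noise_linear_sq
      integrable_support_noise_quadratic_sq]
  show "integrable supports (\<lambda>s. (support_noise s)^2)"
    unfolding noise using Minkowski(1) by simp
  have "(\<integral>s. (support_noise s)^2 \<partial>supports)
      \<le> (sqrt (\<integral>s. (2 * (\<delta> \<bullet> b.sample_mean m (snd s)))^2 \<partial>supports)
         + sqrt (\<integral>s. (b.sq_mean_excess m (snd s) - a.sq_mean_excess m (fst s))^2 \<partial>supports))^2"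
    unfolding noise using Minkowski(2) by simp
  also have "\<dots> \<le> (sqrt (4 * (norm \<delta>)^2 * b.second_moment / real m)
          + sqrt ((a.fourth_moment + b.fourth_moment
                   + (2 * real m - 3) * (a.second_moment^2 + b.second_moment^2)) / real m ^ 3))^2"
    using integral_support_noise_linear_sq_le integral_support_noise_quadratic_sq_le
    by (intro power_mono add_mono real_sqrt_le_mono) auto
  finally show "(\<integral>s. (support_noise s)^2 \<partial>supports) \<le> \<dots>" .
qed

lemma integrable_dir_var: "integrable Ma (\<lambda>z. (u \<bullet> Xa z)^2)"
  by (rule Bochner_Integration.integrable_bound[of _ "\<lambda>z. (norm u)^2 * (norm (Xa z))^2"])
    (use a.integrable_second inner_square_le in \<open>auto intro!: AE_I2\<close>)

lemma dir_var_le: "dir_var u \<le> (norm u)^2 * a.second_moment"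
proof -
  have "dir_var u \<le> (\<integral>z. (norm u)^2 * (norm (Xa z))^2 \<partial>Ma)"
    unfolding dir_var_def
    by (rule integral_mono) (use a.integrable_second integrable_dir_var inner_square_le in auto)
  then show ?thesis unfolding a.second_moment_def by simp
qed

lemma dir_var_add_le:
  "dir_var (\<delta> + e) \<le> dir_var \<delta> + 2 * (e \<bullet> (\<integral>z. (\<delta> \<bullet> Xa z) *\<^sub>R Xa z \<partial>Ma))
    + (norm e)^2 * a.second_moment"
proof -
  have cross: "integrable Ma (\<lambda>z. (\<delta> \<bullet> Xa z) *\<^sub>R Xa z)"
  proof (rule Bochner_Integration.integrable_bound[of _ "\<lambda>z. norm \<delta> * (norm (Xa z))^2"])
    have "norm ((\<delta> \<bullet> Xa z) *\<^sub>R Xa z) \<le> (norm \<delta> * norm (Xa z)) * norm (Xa z)" for z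
      unfolding norm_scaleR by (intro mult_right_mono Cauchy_Schwarz_ineq2) auto
    then show "AE z in Ma. norm ((\<delta> \<bullet> Xa z) *\<^sub>R Xa z) \<le> norm (norm \<delta> * (norm (Xa z))^2)"
      by (auto simp: power2_eq_square mult.assoc)
  qed (use a.integrable_second in auto)
  have "((\<delta> + e) \<bullet> Xa z)^2 = (\<delta> \<bullet> Xa z)^2 + 2 * (e \<bullet> ((\<delta> \<bullet> Xa z) *\<^sub>R Xa z)) + (e \<bullet> Xa z)^2" for z
    by (simp add: inner_add_left power2_eq_square algebra_simps)
  then have "dir_var (\<delta> + e) = dir_var \<delta> + 2 * (e \<bullet> (\<integral>z. (\<delta> \<bullet> Xa z) *\<^sub>R Xa z \<partial>Ma)) + dir_var e"
    unfolding dir_var_def using cross integrable_dir_var by (simp del: inner_scaleR_right)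
  then show ?thesis using dir_var_le[of e] by simp
qed

lemma integrable_margin_noise_sq: "integrable episode (\<lambda>\<omega>. (margin_noise \<omega>)^2)"
proof -
  interpret pair_prob_space supports Ma by (rule pair_prob_space_episode)
  define w where "w s = \<delta> + centroid_error s" for s
  have [measurable]: "w \<in> borel_measurable supports" unfolding w_def by measurable
  have "(norm (w s))^2
      = (norm \<delta>)^2 + 2 * (\<delta> \<bullet> centroid_error s) + (norm (centroid_error s))^2" for s
    by (simp add: w_def power2_norm_eq_inner inner_add inner_commute)
  then have "integrable supports (\<lambda>s. (norm (w s))^2)"
    using integrable_centroid_error integrable_centroid_error_sq by simp
  then have prod: "integrable episode (\<lambda>\<omega>. (norm (w (fst \<omega>)))^2 * (norm (Xa (snd \<omega>)))^2)"
    unfolding episode_def by (rule integrable_mult_indep[OF _ a.integrable_second])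
  have noise: "integrable episode (\<lambda>\<omega>. (support_noise (fst \<omega>))^2)"
    unfolding episode_def by (rule integrable_comp_fst[OF integrable_support_noise_sq])
  show ?thesis
  proof (rule Bochner_Integration.integrable_bound[of _
        "\<lambda>\<omega>. 2 * (support_noise (fst \<omega>))^2 + 8 * ((norm (w (fst \<omega>)))^2 * (norm (Xa (snd \<omega>)))^2)"])
    have ineq: "(p - 2 * q)^2 \<le> 2 * p^2 + 8 * q^2" for p q :: real
      using zero_le_power2[of "p + 2 * q"] by (simp add: power2_eq_square algebra_simps)
    have "(margin_noise \<omega>)^2 \<le> 2 * (support_noise (fst \<omega>))^2 + 8 * (Xa (snd \<omega>) \<bullet> w (fst \<omega>))^2" for \<omega>
      unfolding margin_noise_def w_def by (rule ineq)
    also have "\<dots> \<omega> \<le> 2 * (support_noise (fst \<omega>))^2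
        + 8 * ((norm (w (fst \<omega>)))^2 * (norm (Xa (snd \<omega>)))^2)" for \<omega>
      using inner_square_le[of "Xa (snd \<omega>)" "w (fst \<omega>)"] by (simp add: mult.commute)
    finally show "AE \<omega> in episode. norm ((margin_noise \<omega>)^2)
        \<le> norm (2 * (support_noise (fst \<omega>))^2 + 8 * ((norm (w (fst \<omega>)))^2 * (norm (Xa (snd \<omega>)))^2))"
      by (auto intro!: AE_I2)
  qed (use noise prod in simp_all)
qed

lemma integral_margin_noise_sq_over_test_point:
  "(\<integral>z. (margin_noise (s, z))^2 \<partial>Ma) = (support_noise s)^2 + 4 * dir_var (\<delta> + centroid_error s)"
proof -
  have "(margin_noise (s, z))^2 = (support_noise s)^2
      - 4 * support_noise s * (Xa z \<bullet> (\<delta> + centroid_error s))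
      + 4 * ((\<delta> + centroid_error s) \<bullet> Xa z)^2" for z
    unfolding margin_noise_def by (simp add: power2_eq_square algebra_simps inner_commute)
  moreover have "(\<integral>z. Xa z \<bullet> (\<delta> + centroid_error s) \<partial>Ma) = 0"
    using a.integrable_X a.mean_zero by simp
  ultimately show ?thesis
    unfolding dir_var_def using a.integrable_X integrable_dir_var by (simp add: a.prob_space)
qed

lemma integral_margin_noise_sq_le_support_noise:
  "(\<integral>\<omega>. (margin_noise \<omega>)^2 \<partial>episode)
    \<le> (\<integral>s. (support_noise s)^2 \<partial>supports) + 4 * dir_var \<delta>
      + 4 * a.second_moment * (a.second_moment + b.second_moment) / real m"
proof -
  interpret pair_prob_space supports Ma by (rule pair_prob_space_episode)
  let ?L = "\<integral>z. (\<delta> \<bullet> Xa z) *\<^sub>R Xa z \<partial>Ma"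
  have W: "integrable (supports \<Otimes>\<^sub>M Ma) (\<lambda>\<omega>. (margin_noise \<omega>)^2)"
    using integrable_margin_noise_sq by (simp add: episode_def)
  have "(\<integral>\<omega>. (margin_noise \<omega>)^2 \<partial>episode)
      = (\<integral>s. (support_noise s)^2 + 4 * dir_var (\<delta> + centroid_error s) \<partial>supports)"
    using integral_fst'[OF W] by (simp add: episode_def integral_margin_noise_sq_over_test_point)
  also have "\<dots> \<le> (\<integral>s. (support_noise s)^2
      + 4 * (dir_var \<delta> + 2 * (centroid_error s \<bullet> ?L)
             + (norm (centroid_error s))^2 * a.second_moment) \<partial>supports)"
  proof (rule integral_mono)
    show "integrable supports (\<lambda>s. (support_noise s)^2 + 4 * dir_var (\<delta> + centroid_error s))"
      using integrable_fst'[OF W] by (simp add: integral_margin_noise_sq_over_test_point)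
    show "(support_noise s)^2 + 4 * dir_var (\<delta> + centroid_error s) \<le> (support_noise s)^2
      + 4 * (dir_var \<delta> + 2 * (centroid_error s \<bullet> ?L)
             + (norm (centroid_error s))^2 * a.second_moment)"
      for s by (intro add_left_mono mult_left_mono dir_var_add_le) simp
  qed (use integrable_support_noise_sq integrable_centroid_error integrable_centroid_error_sq
      in simp)
  also have "\<dots> = (\<integral>s. (support_noise s)^2 \<partial>supports) + 4 * dir_var \<delta>
      + 4 * a.second_moment * (a.second_moment + b.second_moment) / real m"
    using integrable_support_noise_sq integrable_centroid_error integrable_centroid_error_sq
      integral_centroid_error integral_centroid_error_sq
    by (simp add: M1.prob_space algebra_simps)
  finally show ?thesis .
qed

definition "margin_noise_bound = 4 * dir_var \<delta>
  + (sqrt (4 * (norm \<delta>)^2 * b.second_moment / real m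
           + 4 * a.second_moment * (a.second_moment + b.second_moment) / real m)
     + sqrt ((a.fourth_moment + b.fourth_moment
              + (2 * real m - 3) * (a.second_moment^2 + b.second_moment^2)) / real m ^ 3))^2"

lemma integral_margin_noise_sq_le:
  assumes "m \<ge> 2"
  shows "(\<integral>\<omega>. (margin_noise \<omega>)^2 \<partial>episode) \<le> margin_noise_bound"
proof -
  have "(2 * real m - 3) \<ge> 0" using assms by simp
  then have "(a.fourth_moment + b.fourth_moment
      + (2 * real m - 3) * (a.second_moment^2 + b.second_moment^2)) / real m ^ 3 \<ge> 0"
    using a.fourth_moment_nonneg b.fourth_moment_nonneg by simp
  moreover have "4 * (norm \<delta>)^2 * b.second_moment / real m \<ge> 0"
    "4 * a.second_moment * (a.second_moment + b.second_moment) / real m \<ge> 0"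
    using a.second_moment_nonneg b.second_moment_nonneg by simp_all
  ultimately show ?thesis
    using integral_margin_noise_sq_le_support_noise integral_support_noise_sq_le
      add_le_power2_sqrt_add
    unfolding margin_noise_bound_def by (smt (verit))
qed

lemma prob_margin_nonpos_le:
  assumes "m \<ge> 2" and "expected_margin > 0"
  shows "measure episode {\<omega> \<in> space episode. margin \<omega> \<le> 0} \<le> margin_noise_bound / expected_margin^2"
proof -
  interpret E: prob_space episode
    unfolding episode_def supports_def
    by (intro prob_space_pair a.prob_space_iid b.prob_space_iid a.prob_space_axioms)
  have "{\<omega> \<in> space episode. margin \<omega> \<le> 0} \<subseteq> {\<omega> \<in> space episode. \<bar>margin_noise \<omega>\<bar> \<ge> expected_margin}"
    using assms(2) by (auto simp: margin_eq)
  then have "measure episode {\<omega> \<in> space episode. margin \<omega> \<le> 0}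
      \<le> measure episode {\<omega> \<in> space episode. \<bar>margin_noise \<omega>\<bar> \<ge> expected_margin}"
    by (intro E.finite_measure_mono) measurable
  also have "\<dots> \<le> (\<integral>\<omega>. (margin_noise \<omega>)^2 \<partial>episode) / expected_margin^2"
    using integrable_margin_noise_sq assms(2) by (intro E.second_moment_method) auto
  also have "\<dots> \<le> margin_noise_bound / expected_margin^2"
    using integral_margin_noise_sq_le[OF assms(1)] by (simp add: divide_right_mono)
  finally show ?thesis .
qed

end

section \<open>Nearest-centroid classification\<close>

lemma sqrt_fourth_moment_term_le:
  fixes d vi vj Mi Mj m :: real
  assumes "d > 0" "vi \<ge> 0" "vj \<ge> 0" "m \<ge> 1"
  shows "sqrt ((Mi + Mj + (2 * m - 3) * (vi^2 + vj^2)) / m ^ 3)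
    \<le> d^2 * sqrt (((Mi + Mj) / d^4 + 2 * (m - 1) * ((vi + vj) / d^2)^2) / m ^ 3)"
proof -
  have "0 \<le> vi^2 + vj^2 + (4 * m - 4) * (vi * vj)" using assms by simp
  then have "(2 * m - 3) * (vi^2 + vj^2) \<le> 2 * (m - 1) * (vi + vj)^2"
    by (simp add: power2_eq_square algebra_simps)
  then have le: "(Mi + Mj + (2 * m - 3) * (vi^2 + vj^2)) / m ^ 3
      \<le> (Mi + Mj + 2 * (m - 1) * (vi + vj)^2) / m ^ 3"
    using assms by (intro divide_right_mono) auto
  define E3 where "E3 = ((Mi + Mj) / d^4 + 2 * (m - 1) * ((vi + vj) / d^2)^2) / m ^ 3"
  have "(d^2)^2 * E3 = (Mi + Mj + 2 * (m - 1) * (vi + vj)^2) / m ^ 3"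
    using assms by (simp add: E3_def field_simps power2_eq_square power4_eq_xxxx)
  with le have "sqrt ((Mi + Mj + (2 * m - 3) * (vi^2 + vj^2)) / m ^ 3) \<le> sqrt ((d^2)^2 * E3)"
    by (simp only: real_sqrt_le_mono)
  also have "\<dots> = d^2 * sqrt E3" by (simp only: real_sqrt_mult real_sqrt_abs abs_power2)
  finally show ?thesis unfolding E3_def .
qed

lemma sqrt_second_moment_term_le:
  fixes d vi vj m :: real
  assumes "d > 0" "vi \<ge> 0" "vj \<ge> 0" "m > 0"
  defines "V \<equiv> (vi + vj) / d^2"
  shows "sqrt (4 * d^2 * vj / m + 4 * vi * (vi + vj) / m)
    \<le> d^2 * (sqrt (4 / m * (V^2 + V / 4)) + sqrt (V / m))"
proof -
  have V: "V \<ge> 0" "d^2 * V = vi + vj" using assms by (simp_all add: V_def)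
  define S where "S = sqrt (4 / m * (V^2 + V / 4)) + sqrt (V / m)"
  have S: "4 * V^2 / m + 4 * V / m \<le> S^2"
  proof -
    define E1 where "E1 = 4 / m * (V^2 + V / 4)"
    define E2 where "E2 = V / m"
    have E: "E1 \<ge> 0" "E2 \<ge> 0" "E2 \<le> E1" "4 * V^2 / m + 4 * V / m = E1 + 3 * E2"
      using V assms by (simp_all add: E1_def E2_def field_simps)
    then have "E2 \<le> sqrt E1 * sqrt E2"
      using mult_right_mono[OF real_sqrt_le_mono[OF E(3)], of "sqrt E2"] by simp
    then have "E1 + 3 * E2 \<le> (sqrt E1 + sqrt E2)^2"
      using E by (simp add: power2_eq_square algebra_simps)
    then show ?thesis using E(4) by (simp add: S_def E1_def E2_def)
  qed
  have "4 * d^2 * vj / m + 4 * vi * (vi + vj) / m \<le> 4 * d^2 * (vi + vj) / m + 4 * (vi + vj)^2 / m"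
    using assms
    by (intro add_mono divide_right_mono) (auto simp: power2_eq_square intro!: mult_right_mono)
  also have "\<dots> = (d^2)^2 * (4 * V^2 / m + 4 * V / m)"
    using V(2)[symmetric] by (simp add: field_simps power2_eq_square)
  also have "\<dots> \<le> (d^2)^2 * S^2"
    using S by (intro mult_left_mono) auto
  finally have "4 * d^2 * vj / m + 4 * vi * (vi + vj) / m \<le> (d^2 * S)^2"
    by (simp add: power_mult_distrib)
  moreover have "0 \<le> d^2 * S" using V assms by (simp add: S_def)
  ultimately have "sqrt (4 * d^2 * vj / m + 4 * vi * (vi + vj) / m) \<le> d^2 * S"
    by (rule real_le_lsqrt[rotated])
  then show ?thesis unfolding S_def .
qed

lemma pairwise_bound_normalised:
  fixes d vi vj Mi Mj q m :: real
  assumes d: "d > 0" and moments: "vi \<ge> 0" "vj \<ge> 0" "Mi \<ge> 0" "Mj \<ge> 0" and m: "m \<ge> 2"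
    and gap: "d^2 + (vj - vi) / m > 0"
  defines "V \<equiv> (vi + vj) / d^2" and "\<Theta> \<equiv> (Mi + Mj) / d^4"
    and "r \<equiv> 1 + (vj - vi) / (m * d^2)"
  shows "(4 * (d^2 * q) + (sqrt (4 * d^2 * vj / m + 4 * vi * (vi + vj) / m)
          + sqrt ((Mi + Mj + (2 * m - 3) * (vi^2 + vj^2)) / m ^ 3))^2) / (d^2 + (vj - vi) / m)^2
   \<le> 4 * (q / d^2) / r^2
     + (sqrt (4 / m * (V^2 + V / 4)) + sqrt (V / m)
        + sqrt ((\<Theta> + 2 * (m - 1) * V^2) / m ^ 3))^2 / r^2"
proof -
  have c: "d^2 + (vj - vi) / m = d^2 * r" unfolding r_def using d m by (simp add: field_simps)
  have "r > 0" using c d gap by (simp add: zero_less_mult_iff)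
  let ?X1 = "4 * d^2 * vj / m + 4 * vi * (vi + vj) / m"
  let ?X2 = "(Mi + Mj + (2 * m - 3) * (vi^2 + vj^2)) / m ^ 3"
  let ?E = "sqrt (4 / m * (V^2 + V / 4)) + sqrt (V / m) + sqrt ((\<Theta> + 2 * (m - 1) * V^2) / m ^ 3)"
  have "sqrt ?X1 + sqrt ?X2 \<le> d^2 * ?E"
    using sqrt_second_moment_term_le[of d vi vj m] sqrt_fourth_moment_term_le[of d vi vj m Mi Mj]
      d moments m
    by (simp add: V_def \<Theta>_def distrib_left)
  moreover have "0 \<le> sqrt ?X1 + sqrt ?X2" using d moments m by simp
  ultimately have "(sqrt ?X1 + sqrt ?X2)^2 \<le> (d^2 * ?E)^2" by (rule power_mono)
  then have "(sqrt ?X1 + sqrt ?X2)^2 / (d^2 * r)^2 \<le> (d^2 * ?E)^2 / (d^2 * r)^2"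
    by (rule divide_right_mono) simp
  moreover have "(d^2 * ?E)^2 / (d^2 * r)^2 = ?E^2 / r^2"
    using d by (simp add: power_mult_distrib)
  moreover have "4 * (d^2 * q) / (d^2 * r)^2 = 4 * (q / d^2) / r^2"
    using d \<open>r > 0\<close> by (simp add: field_simps power2_eq_square)
  ultimately show ?thesis unfolding c by (simp add: add_divide_distrib)
qed

lemma centred_fourth_moment_class:
  assumes "prob_space (D c)" "f \<in> borel_measurable (D c)"
    and "integrable (D c) (\<lambda>x. (norm (f x - cmean D f c))^4)"
  shows "centred_fourth_moment (D c) (\<lambda>x. f x - cmean D f c)"
proof -
  interpret prob_space "D c" by fact
  have [measurable]: "f \<in> borel_measurable (D c)" by fact
  have "integrable (D c) (\<lambda>x. f x - cmean D f c)"
    by (rule integrable_if_dominated_by_power4[where g = "\<lambda>x. norm (f x - cmean D f c)" and n = 1])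
      (use assms(3) in simp_all)
  then have "integrable (D c) (\<lambda>x. (f x - cmean D f c) + cmean D f c)"
    by (rule Bochner_Integration.integrable_add[OF _ integrable_const])
  then have "integrable (D c) f" by simp
  then have "(\<integral>x. f x - cmean D f c \<partial>D c) = 0"
    by (simp add: prob_space cmean_def)
  then show ?thesis
    using assms(3) by unfold_locales simp_all
qed

lemma measure_ncc_space_two_classes:
  assumes prob: "\<And>c. c < C \<Longrightarrow> prob_space (D c)" and ij: "i < C" "j < C" "i \<noteq> j"
    and meas: "{\<eta> \<in> space ((PiM {..<m} (\<lambda>_. D i) \<Otimes>\<^sub>M PiM {..<m} (\<lambda>_. D j)) \<Otimes>\<^sub>M D i).
                 P (fst (fst \<eta>)) (snd (fst \<eta>)) (snd \<eta>)}
               \<in> sets ((PiM {..<m} (\<lambda>_. D i) \<Otimes>\<^sub>M PiM {..<m} (\<lambda>_. D j)) \<Otimes>\<^sub>M D i)"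
  shows "measure (ncc_space C m D i)
      {\<omega> \<in> space (ncc_space C m D i). P (fst \<omega> i) (fst \<omega> j) (snd \<omega>)}
    = measure ((PiM {..<m} (\<lambda>_. D i) \<Otimes>\<^sub>M PiM {..<m} (\<lambda>_. D j)) \<Otimes>\<^sub>M D i)
      {\<eta> \<in> space ((PiM {..<m} (\<lambda>_. D i) \<Otimes>\<^sub>M PiM {..<m} (\<lambda>_. D j)) \<Otimes>\<^sub>M D i).
        P (fst (fst \<eta>)) (snd (fst \<eta>)) (snd \<eta>)}"
proof -
  have "{\<omega> \<in> space (ncc_space C m D i). P (fst \<omega> i) (fst \<omega> j) (snd \<omega>)}
    = (\<lambda>(x, z). ((x i, x j), z)) -`
        {\<eta> \<in> space ((PiM {..<m} (\<lambda>_. D i) \<Otimes>\<^sub>M PiM {..<m} (\<lambda>_. D j)) \<Otimes>\<^sub>M D i).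
        P (fst (fst \<eta>)) (snd (fst \<eta>)) (snd \<eta>)} \<inter> space (ncc_space C m D i)"
    using ij by (auto simp: ncc_space_def space_pair_measure space_PiM PiE_iff)
  then show ?thesis
    unfolding ncc_space_def
    by (simp only:)
      (rule measure_PiM_two_components; use prob ij meas in \<open>simp add: prob_space_PiM\<close>)
qed

lemma scaleR_sum_shift:
  fixes u :: "nat \<Rightarrow> 'a::real_vector"
  assumes "m > 0"
  shows "(1 / real m) *\<^sub>R (\<Sum>s<m. u s) = c + (1 / real m) *\<^sub>R (\<Sum>s<m. u s - c)"
  using assms by (simp add: sum_subtractf scaleR_diff_right sum_constant_scaleR del: sum_constant)

lemma cdist_sq_mult_covq_cdir:
  assumes "cdist D f i j > 0"
  shows "(cdist D f i j)^2 * covq D f i (cdir D f i j)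
    = (\<integral>z. ((cmean D f j - cmean D f i) \<bullet> (f z - cmean D f i))^2 \<partial>D i)"
proof -
  have "((cmean D f j - cmean D f i) \<bullet> (f z - cmean D f i))^2
      = (cdist D f i j)^2 * (cdir D f i j \<bullet> (f z - cmean D f i))^2" for z
    using assms by (simp add: cdir_def cdist_def power_divide)
  then show ?thesis by (simp add: covq_def)
qed

lemma ncc_pairwise_error_le:
  fixes C m :: nat and D :: "nat \<Rightarrow> 'x measure" and f :: "'x \<Rightarrow> real^'d" and i j :: nat
  assumes m: "m \<ge> 2"
    and prob: "\<And>c. c < C \<Longrightarrow> prob_space (D c)"
    and f_meas: "\<And>c. c < C \<Longrightarrow> f \<in> borel_measurable (D c)"
    and fourth: "\<And>c. c < C \<Longrightarrow> integrable (D c) (\<lambda>x. (norm (f x - cmean D f c))^4)"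
    and ij: "i < C" "j < C" "i \<noteq> j"
    and sep: "cdist D f i j > 0"
    and gap: "(cdist D f i j)^2 + (cvar D f j - cvar D f i) / real m > 0"
  shows "measure (ncc_space C m D i)
     {\<omega> \<in> space (ncc_space C m D i).
        (norm (f (snd \<omega>) - (1 / real m) *\<^sub>R (\<Sum>s<m. f (fst \<omega> j s))))^2
        \<le> (norm (f (snd \<omega>) - (1 / real m) *\<^sub>R (\<Sum>s<m. f (fst \<omega> i s))))^2}
   \<le> 4 * dir_cdnv D f i j /
          (1 + (cvar D f j - cvar D f i) / (real m * (cdist D f i j)^2))^2
     + (sqrt (4 / real m * ((cdnv D f i j)^2 + cdnv D f i j / 4))
         + sqrt (cdnv D f i j / real m)
         + sqrt ((ctheta D f i j + 2 * (real m - 1) * (cdnv D f i j)^2) / (real m)^3))^2 /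
          (1 + (cvar D f j - cvar D f i) / (real m * (cdist D f i j)^2))^2" (is "?P \<le> ?bound")
proof -
  define g where "g c x = f x - cmean D f c" for c x
  define \<delta> where "\<delta> = cmean D f j - cmean D f i"
  have "centred_fourth_moment (D c) (g c)" if "c < C" for c
    unfolding g_def[abs_def] using that by (intro centred_fourth_moment_class prob f_meas fourth)
  then interpret ncc_pair "D i" "g i" "D j" "g j" m \<delta>
    using ij m by (simp add: ncc_pair_def ncc_pair_axioms_def)
  have moments: "a.second_moment = cvar D f i" "b.second_moment = cvar D f j"
    "a.fourth_moment = cM4 D f i" "b.fourth_moment = cM4 D f j"
    by (simp_all add: a.second_moment_def b.second_moment_def a.fourth_moment_def
        b.fourth_moment_def cvar_def cM4_def g_def)
  have d: "cdist D f i j = norm \<delta>" unfolding cdist_def \<delta>_def ..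
  have margin_pos: "expected_margin > 0"
    using gap by (simp add: expected_margin_def moments d)
  have dir: "dir_var \<delta> = (cdist D f i j)^2 * covq D f i (cdir D f i j)"
    unfolding cdist_sq_mult_covq_cdir[OF sep] dir_var_def \<delta>_def g_def ..
  have mean_j: "f z - (1 / real m) *\<^sub>R (\<Sum>s<m. f (ys s)) = g i z - \<delta> - b.sample_mean m ys" for ys z
    using scaleR_sum_shift[of m "\<lambda>s. f (ys s)" "cmean D f j"] m
    by (simp add: b.sample_mean_def b.sample_sum_def g_def \<delta>_def algebra_simps)
  have mean_i: "f z - (1 / real m) *\<^sub>R (\<Sum>s<m. f (xs s)) = g i z - a.sample_mean m xs" for xs z
    using scaleR_sum_shift[of m "\<lambda>s. f (xs s)" "cmean D f i"] m
    by (simp add: a.sample_mean_def a.sample_sum_def g_def algebra_simps)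
  have closer: "(norm (f z - (1 / real m) *\<^sub>R (\<Sum>s<m. f (ys s))))^2
      \<le> (norm (f z - (1 / real m) *\<^sub>R (\<Sum>s<m. f (xs s))))^2 \<longleftrightarrow> margin ((xs, ys), z) \<le> 0" for xs ys z
    unfolding mean_j[of z ys] mean_i[of z xs] margin_def by simp
  have "?P = measure episode {\<eta> \<in> space episode. margin \<eta> \<le> 0}"
    using measure_ncc_space_two_classes[OF prob ij, where P = "\<lambda>xs ys z. margin ((xs, ys), z) \<le> 0"]
      measurable_margin
    by (simp add: closer episode_def supports_def a.iid_def b.iid_def)
  also note prob_margin_nonpos_le[OF m margin_pos]
  also have "margin_noise_bound / expected_margin^2 \<le> ?bound"
    unfolding margin_noise_bound_def dir d[symmetric] moments expected_margin_def
      dir_cdnv_def cdnv_def ctheta_def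
    by (rule pairwise_bound_normalised)
      (use sep m gap a.second_moment_nonneg b.second_moment_nonneg a.fourth_moment_nonneg
        b.fourth_moment_nonneg in \<open>simp_all add: moments\<close>)
  finally show ?thesis .
qed

lemma ncc_pred_ne_imp_closer:
  fixes mus :: "nat \<Rightarrow> real^'d"
  assumes tb: "\<And>S. S \<noteq> {} \<Longrightarrow> S \<subseteq> {..<C} \<Longrightarrow> tb S \<in> S"
    and i: "i < C" and wrong: "ncc_pred C tb mus z \<noteq> i"
  shows "\<exists>j\<in>{..<C} - {i}. (norm (z - mus j))^2 \<le> (norm (z - mus i))^2"
proof -
  define S where "S = {c \<in> {..<C}. \<forall>c'\<in>{..<C}. (norm (z - mus c))^2 \<le> (norm (z - mus c'))^2}"
  have "{..<C} \<noteq> {}" using i by auto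
  then have "arg_min_on (\<lambda>c. (norm (z - mus c))^2) {..<C} \<in> S"
    using arg_min_if_finite[of "{..<C}" "\<lambda>c. (norm (z - mus c))^2"] by (auto simp: S_def not_less)
  then have "tb S \<in> S" by (intro tb) (auto simp: S_def)
  then show ?thesis
    using i wrong by (auto simp: S_def ncc_pred_def)
qed

lemma measurable_ncc_centroid:
  fixes f :: "'x \<Rightarrow> 'b::euclidean_space"
  assumes "c < C" and "f \<in> borel_measurable (D c)"
  shows "(\<lambda>\<omega>. (1 / real m) *\<^sub>R (\<Sum>s<m. f (fst \<omega> c s))) \<in> borel_measurable (ncc_space C m D i)"
proof -
  have "(\<lambda>\<omega>. f (fst \<omega> c s)) \<in> borel_measurable (ncc_space C m D i)" if "s < m" for s
  proof -
    have "fst \<in> measurable (ncc_space C m D i) (PiM {..<C} (\<lambda>c. PiM {..<m} (\<lambda>s. D c)))"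
      unfolding ncc_space_def by (rule measurable_fst)
    moreover have "(\<lambda>y. y c)
        \<in> measurable (PiM {..<C} (\<lambda>c. PiM {..<m} (\<lambda>s. D c))) (PiM {..<m} (\<lambda>s. D c))"
      using assms by (intro measurable_component_singleton) auto
    moreover have "(\<lambda>x. x s) \<in> measurable (PiM {..<m} (\<lambda>s. D c)) (D c)"
      using that by (intro measurable_component_singleton) auto
    ultimately have "(\<lambda>\<omega>. fst \<omega> c s) \<in> measurable (ncc_space C m D i) (D c)"
      using measurable_compose by fastforce
    then show ?thesis using assms(2) by (rule measurable_compose)
  qed
  then show ?thesis
    by (intro borel_measurable_scaleR[OF borel_measurable_const borel_measurable_sum]) simp
qed

lemma ncc_class_error_le_sum:
  fixes C m :: nat and D :: "nat \<Rightarrow> 'x measure" and f :: "'x \<Rightarrow> real^'d"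
  assumes prob: "\<And>c. c < C \<Longrightarrow> prob_space (D c)"
    and f_meas: "\<And>c. c < C \<Longrightarrow> f \<in> borel_measurable (D c)"
    and tb: "\<And>S. S \<noteq> {} \<Longrightarrow> S \<subseteq> {..<C} \<Longrightarrow> tb S \<in> S"
    and i: "i < C"
  defines "mu \<omega> c \<equiv> (1 / real m) *\<^sub>R (\<Sum>s<m. f (fst \<omega> c s))"
  shows "measure (ncc_space C m D i)
      {\<omega> \<in> space (ncc_space C m D i). ncc_pred C tb (mu \<omega>) (f (snd \<omega>)) \<noteq> i}
    \<le> (\<Sum>j\<in>{..<C} - {i}. measure (ncc_space C m D i)
      {\<omega> \<in> space (ncc_space C m D i).
        (norm (f (snd \<omega>) - mu \<omega> j))^2 \<le> (norm (f (snd \<omega>) - mu \<omega> i))^2})"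
proof -
  let ?\<Omega> = "ncc_space C m D i"
  interpret prob_space ?\<Omega> unfolding ncc_space_def
    by (intro prob_space_pair prob_space_PiM) (use prob i in auto)
  have mu_meas: "(\<lambda>\<omega>. mu \<omega> c) \<in> borel_measurable ?\<Omega>" if "c < C" for c
    unfolding mu_def by (rule measurable_ncc_centroid[where D = D, OF that f_meas[OF that]])
  have snd_meas: "(\<lambda>\<omega>. f (snd \<omega>)) \<in> borel_measurable ?\<Omega>"
    unfolding ncc_space_def by (rule measurable_compose[OF measurable_snd f_meas[OF i]])
  have events: "{\<omega> \<in> space ?\<Omega>. (norm (f (snd \<omega>) - mu \<omega> j))^2 \<le> (norm (f (snd \<omega>) - mu \<omega> i))^2}
      \<in> sets ?\<Omega>" if "j < C" for j
  proof -
    note [measurable] = mu_meas[OF that] mu_meas[OF i] snd_meas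
    show ?thesis by measurable
  qed
  have "{\<omega> \<in> space ?\<Omega>. ncc_pred C tb (mu \<omega>) (f (snd \<omega>)) \<noteq> i}
    \<subseteq> (\<Union>j\<in>{..<C} - {i}.
        {\<omega> \<in> space ?\<Omega>. (norm (f (snd \<omega>) - mu \<omega> j))^2 \<le> (norm (f (snd \<omega>) - mu \<omega> i))^2})"
  proof safe
    fix \<omega> assume "\<omega> \<in> space ?\<Omega>" "ncc_pred C tb (mu \<omega>) (f (snd \<omega>)) \<noteq> i"
    then show "\<omega> \<in> (\<Union>j\<in>{..<C} - {i}.
        {\<omega> \<in> space ?\<Omega>. (norm (f (snd \<omega>) - mu \<omega> j))^2 \<le> (norm (f (snd \<omega>) - mu \<omega> i))^2})"
      using ncc_pred_ne_imp_closer[OF tb i, of "mu \<omega>" "f (snd \<omega>)"] by blast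
  qed
  then have "measure ?\<Omega> {\<omega> \<in> space ?\<Omega>. ncc_pred C tb (mu \<omega>) (f (snd \<omega>)) \<noteq> i}
    \<le> measure ?\<Omega> (\<Union>j\<in>{..<C} - {i}.
        {\<omega> \<in> space ?\<Omega>. (norm (f (snd \<omega>) - mu \<omega> j))^2 \<le> (norm (f (snd \<omega>) - mu \<omega> i))^2})"
    by (rule finite_measure_mono) (use events in auto)
  also have "\<dots> \<le> (\<Sum>j\<in>{..<C} - {i}. measure ?\<Omega>
      {\<omega> \<in> space ?\<Omega>. (norm (f (snd \<omega>) - mu \<omega> j))^2 \<le> (norm (f (snd \<omega>) - mu \<omega> i))^2})"
    by (rule finite_measure_subadditive_finite) (use events in auto)
  finally show ?thesis .
qed

theorem theorem1:
  fixes C m :: nat and Mx :: "'x measure" and D :: "nat \<Rightarrow> 'x measure"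
    and f :: "'x \<Rightarrow> real^'d" and tb :: "nat set \<Rightarrow> nat"
  assumes C2: "C \<ge> 2" and m10: "m \<ge> 10"
    and prob: "\<And>c. c < C \<Longrightarrow> prob_space (D c)"
    and sets_D: "\<And>c. c < C \<Longrightarrow> sets (D c) = sets Mx"
    and f_meas: "f \<in> borel_measurable Mx"
    and fourth: "\<And>c. c < C \<Longrightarrow> integrable (D c) (\<lambda>x. (norm (f x - cmean D f c))^4)"
    and sep: "\<And>i j. i < C \<Longrightarrow> j < C \<Longrightarrow> i \<noteq> j \<Longrightarrow> cdist D f i j > 0"
    and gap: "\<And>i j. i < C \<Longrightarrow> j < C \<Longrightarrow> i \<noteq> j \<Longrightarrow>
                 (cdist D f i j)^2 + (cvar D f j - cvar D f i) / real m > 0"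
    and tb: "\<And>S. S \<noteq> {} \<Longrightarrow> S \<subseteq> {..<C} \<Longrightarrow> tb S \<in> S"
  shows "ncc_err C m D f tb \<le>
     (1 / real C) * (\<Sum>i<C. \<Sum>j\<in>{..<C} - {i}.
        4 * dir_cdnv D f i j /
          (1 + (cvar D f j - cvar D f i) / (real m * (cdist D f i j)^2))^2)
   + (1 / real C) * (\<Sum>i<C. \<Sum>j\<in>{..<C} - {i}.
        (sqrt (4 / real m * ((cdnv D f i j)^2 + cdnv D f i j / 4))
         + sqrt (cdnv D f i j / real m)
         + sqrt ((ctheta D f i j + 2 * (real m - 1) * (cdnv D f i j)^2) / (real m)^3))^2 /
          (1 + (cvar D f j - cvar D f i) / (real m * (cdist D f i j)^2))^2)"
proof -
  have f_meas': "f \<in> borel_measurable (D c)" if "c < C" for c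
    using f_meas measurable_cong_sets[OF sets_D[OF that] refl] by blast
  define T where "T i j = 4 * dir_cdnv D f i j /
          (1 + (cvar D f j - cvar D f i) / (real m * (cdist D f i j)^2))^2
     + (sqrt (4 / real m * ((cdnv D f i j)^2 + cdnv D f i j / 4))
         + sqrt (cdnv D f i j / real m)
         + sqrt ((ctheta D f i j + 2 * (real m - 1) * (cdnv D f i j)^2) / (real m)^3))^2 /
          (1 + (cvar D f j - cvar D f i) / (real m * (cdist D f i j)^2))^2" for i j
  have "measure (ncc_space C m D i) {\<omega> \<in> space (ncc_space C m D i).
      ncc_pred C tb (\<lambda>c. (1 / real m) *\<^sub>R (\<Sum>s<m. f (fst \<omega> c s))) (f (snd \<omega>)) \<noteq> i}
    \<le> (\<Sum>j\<in>{..<C} - {i}. T i j)" if i: "i < C" for i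
    using ncc_class_error_le_sum[OF prob f_meas' tb i]
  proof (rule order_trans[OF _ sum_mono])
    fix j assume "j \<in> {..<C} - {i}"
    then show "measure (ncc_space C m D i) {\<omega> \<in> space (ncc_space C m D i).
        (norm (f (snd \<omega>) - (1 / real m) *\<^sub>R (\<Sum>s<m. f (fst \<omega> j s))))^2
        \<le> (norm (f (snd \<omega>) - (1 / real m) *\<^sub>R (\<Sum>s<m. f (fst \<omega> i s))))^2} \<le> T i j"
      unfolding T_def using i m10 sep gap
      by (intro ncc_pairwise_error_le[OF _ prob f_meas' fourth]) auto
  qed
  then have "ncc_err C m D f tb \<le> (1 / real C) * (\<Sum>i<C. \<Sum>j\<in>{..<C} - {i}. T i j)"
    unfolding ncc_err_def by (intro mult_left_mono sum_mono) auto
  then show ?thesis by (simp add: T_def sum.distrib distrib_left)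
qed

end
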